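(* Let $k$ be a field, let $V_\bullet$ be a complex of finite dimensional $k$-vector spaces, indexed cohomologically (differential $d_i:V_i\to V_{i+1}$, $i\in\mathbb{Z}$), and let $\phi_\bullet:V_\bullet\to V_\bullet$ be a chain map. For each $i$ let $\phi_i^H:H^i(V_\bullet)\to H^i(V_\bullet)$ be the induced map on cohomology. Then the following are equivalent: (a) $\phi_\bullet$ is chain homotopic to a commutator in the endomorphism ring of the complex $V_\bullet$ (i.e. to a chain map of the form $\alpha_\bullet\beta_\bullet-\beta_\bullet\alpha_\bullet$ with $\alpha_\bullet,\beta_\bullet$ chain endomorphisms of $V_\bullet$); (b) $\operatorname{tr}(\phi_i^H)=0$ for every index $i\in\mathbb{Z}$.
   Context: $\operatorname{tr}$ denotes the trace of an endomorphism of a finite dimensional vector space. $H^i(V_\bullet)=\ker d_i/\operatorname{im} d_{i-1}$. *)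

theory Defs
  imports Complex_Main
begin

text \<open>Finite dimensional k-vector spaces V_i (i in Z) are modelled as finite dimensional
  subspaces of one ambient k-vector space (scalar multiplication scale); a linear map
  V_i to V_j is a function on the ambient type that is linear on V_i and maps V_i into V_j.
  Only its values on V_i matter.\<close>

definition lin_on :: "('k::field \<Rightarrow> 'v::ab_group_add \<Rightarrow> 'v) \<Rightarrow> 'v set \<Rightarrow> 'v set \<Rightarrow> ('v \<Rightarrow> 'v) \<Rightarrow> bool" where
  "lin_on scale S T f \<longleftrightarrow> (\<forall>x\<in>S. f x \<in> T) \<and> (\<forall>x\<in>S. \<forall>y\<in>S. f (x + y) = f x + f y)
     \<and> (\<forall>c. \<forall>x\<in>S. f (scale c x) = scale c (f x))"

definition is_complex :: "('k::field \<Rightarrow> 'v::ab_group_add \<Rightarrow> 'v) \<Rightarrow> (int \<Rightarrow> 'v set) \<Rightarrow> (int \<Rightarrow> 'v \<Rightarrow> 'v) \<Rightarrow> bool" where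
  "is_complex scale V d \<longleftrightarrow>
     (\<forall>i. \<exists>B. finite B \<and> module.span scale B = V i) \<and>
     (\<forall>i. lin_on scale (V i) (V (i + 1)) (d i)) \<and>
     (\<forall>i. \<forall>x\<in>V i. d (i + 1) (d i x) = 0)"

definition chain_map :: "('k::field \<Rightarrow> 'v::ab_group_add \<Rightarrow> 'v) \<Rightarrow> (int \<Rightarrow> 'v set) \<Rightarrow> (int \<Rightarrow> 'v \<Rightarrow> 'v) \<Rightarrow> (int \<Rightarrow> 'v \<Rightarrow> 'v) \<Rightarrow> bool" where
  "chain_map scale V d f \<longleftrightarrow>
     (\<forall>i. lin_on scale (V i) (V i) (f i)) \<and> (\<forall>i. \<forall>x\<in>V i. d i (f i x) = f (i + 1) (d i x))"

definition chain_homotopic :: "('k::field \<Rightarrow> 'v::ab_group_add \<Rightarrow> 'v) \<Rightarrow> (int \<Rightarrow> 'v set) \<Rightarrow> (int \<Rightarrow> 'v \<Rightarrow> 'v) \<Rightarrow> (int \<Rightarrow> 'v \<Rightarrow> 'v) \<Rightarrow> (int \<Rightarrow> 'v \<Rightarrow> 'v) \<Rightarrow> bool" where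
  "chain_homotopic scale V d f g \<longleftrightarrow>
     (\<exists>h. (\<forall>i. lin_on scale (V i) (V (i - 1)) (h i)) \<and>
          (\<forall>i. \<forall>x\<in>V i. f i x - g i x = d (i - 1) (h i x) + h (i + 1) (d i x)))"

definition cocycles :: "(int \<Rightarrow> 'v set) \<Rightarrow> (int \<Rightarrow> 'v \<Rightarrow> 'v::ab_group_add) \<Rightarrow> int \<Rightarrow> 'v set" where
  "cocycles V d i = {x \<in> V i. d i x = 0}"

definition coboundaries :: "(int \<Rightarrow> 'v set) \<Rightarrow> (int \<Rightarrow> 'v \<Rightarrow> 'v::ab_group_add) \<Rightarrow> int \<Rightarrow> 'v set" where
  "coboundaries V d i = d (i - 1) ` V (i - 1)"

text \<open>Trace of the map induced by f on the quotient W/U (U a subspace of W, both f-invariant):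
  choose a basis BU of U and extend it to a basis B of W; the classes of the vectors in B - BU
  form a basis of W/U, and the diagonal matrix entry of the induced map at the class of b is the
  b-coordinate of f b with respect to B.\<close>
definition quot_trace :: "('k::field \<Rightarrow> 'v::ab_group_add \<Rightarrow> 'v) \<Rightarrow> 'v set \<Rightarrow> 'v set \<Rightarrow> ('v \<Rightarrow> 'v) \<Rightarrow> 'k" where
  "quot_trace scale W U f =
    (let BU = (SOME BU. \<not> module.dependent scale BU \<and> module.span scale BU = U);
         B = (SOME B. BU \<subseteq> B \<and> \<not> module.dependent scale B \<and> module.span scale B = W)
     in \<Sum>b\<in>B - BU. module.representation scale B (f b) b)"

definition cohom_trace :: "('k::field \<Rightarrow> 'v::ab_group_add \<Rightarrow> 'v) \<Rightarrow> (int \<Rightarrow> 'v set) \<Rightarrow> (int \<Rightarrow> 'v \<Rightarrow> 'v) \<Rightarrow> (int \<Rightarrow> 'v \<Rightarrow> 'v) \<Rightarrow> int \<Rightarrow> 'k" where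
  "cohom_trace scale V d f i = quot_trace scale (cocycles V d i) (coboundaries V d i) (f i)"

end

theory Submission
  imports Defs
begin

text \<open>
  Split each \<open>V\<^sub>i = B\<^sub>i \<oplus> H\<^sub>i \<oplus> C\<^sub>i\<close> with \<open>B\<^sub>i = im d\<^sub>i\<^sub>-\<^sub>1\<close> and
  \<open>B\<^sub>i \<oplus> H\<^sub>i = ker d\<^sub>i\<close>, so \<open>H\<^sub>i \<cong> H\<^sup>i\<close>. Inverting \<open>d\<close> from \<open>B\<^sub>i\<^sub>+\<^sub>1\<close> back to \<open>C\<^sub>i\<close>
  gives a homotopy \<open>h\<close> with \<open>d h + h d = 1 - p\<close>, \<open>p\<close> the projection onto \<open>H\<close>; hence every chain
  map \<open>\<phi>\<close> is homotopic to its compression \<open>p \<phi> p\<close>, and homotopic maps agree modulo \<open>B\<close> on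
  cocycles. So (a) gives \<open>\<phi>\<^sup>H = [\<alpha>\<^sup>H, \<beta>\<^sup>H]\<close>, whose trace vanishes. Conversely, if
  \<open>tr \<phi>\<^sup>H\<^sub>i = 0\<close>, Shoda's theorem writes \<open>p \<phi> p\<close> on \<open>H\<^sub>i\<close> as a commutator \<open>[A, B]\<close>, and
  \<open>\<alpha> = A p\<close>, \<open>\<beta> = B p\<close> are chain maps with \<open>[\<alpha>, \<beta>] = p \<phi> p\<close>.

  Shoda's theorem (a traceless endomorphism \<open>f\<close> of a finite dimensional space is a commutator,
  over any field) is proved with a basis \<open>us @ ws\<close> built from Krylov chains, for which the
  diagonal blocks of \<open>f\<close> on \<open>span us \<oplus> span ws\<close> are strictly triangular resp. triangular.
  Take \<open>X = N\<^sub>1 \<oplus> (1 + N\<^sub>2)\<close> with nilpotent shifts \<open>N\<^sub>1, N\<^sub>2\<close> along the two parts; the blocks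
  of \<open>Y\<close> with \<open>[X, Y] = f\<close> are found by recursion along the bases: the diagonal ones solve
  \<open>[N, Y] = B\<close> for triangular \<open>B\<close> of trace zero, the off-diagonal ones are Sylvester equations
  \<open>T Z - Z N = C\<close> with \<open>T\<close> invertible and \<open>N\<close> nilpotent.
\<close>

section \<open>Shifts along lists\<close>

lemma set_drop_conv_nth: "set (drop j xs) = {xs!i | i. j \<le> i \<and> i < length xs}"
  unfolding drop_eq_nths set_nths by auto

lemma backward_recursion:
  assumes "P a" and "\<And>k z. k < n \<Longrightarrow> P z \<Longrightarrow> P (F k z)"
  shows "\<exists>z. z n = a \<and> (\<forall>k<n. z k = F k (z (Suc k))) \<and> (\<forall>k\<le>n. P (z k))"
proof -
  define w where "w = rec_nat a (\<lambda>j z. F (n - Suc j) z)"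
  have w: "w 0 = a" "w (Suc j) = F (n - Suc j) (w j)" for j unfolding w_def by simp_all
  have "P (w j)" if "j \<le> n" for j
    using that by (induction j) (auto simp: w assms)
  moreover have "w (n - k) = F k (w (n - Suc k))" if "k < n" for k
    using w(2)[of "n - Suc k"] that by (simp add: Suc_diff_Suc)
  ultimately show ?thesis using w(1) by (intro exI[of _ "\<lambda>k. w (n - k)"]) simp
qed

definition shift_along :: "('v::zero \<Rightarrow> 'v) \<Rightarrow> 'v list \<Rightarrow> bool" where
  "shift_along N fs \<longleftrightarrow>
     (\<forall>k. Suc k < length fs \<longrightarrow> N (fs!k) = fs!Suc k) \<and> (fs \<noteq> [] \<longrightarrow> N (last fs) = 0)"

lemma shift_along_nth:
  assumes "shift_along N fs" "k < length fs"
  shows "N (fs!k) = (if Suc k < length fs then fs!Suc k else 0)"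
proof (cases "Suc k < length fs")
  case False
  then have "fs!k = last fs"
    using assms(2) by (metis Suc_lessI diff_Suc_1 last_conv_nth length_greater_0_conv zero_less_Suc)
  with False assms show ?thesis unfolding shift_along_def by auto
qed (use assms in \<open>auto simp: shift_along_def\<close>)

fun succ_in :: "'a::zero list \<Rightarrow> 'a \<Rightarrow> 'a" where
  "succ_in (a # b # xs) x = (if x = a then b else succ_in (b # xs) x)"
| "succ_in _ x = 0"

lemma succ_in_notin: "x \<notin> set xs \<Longrightarrow> succ_in xs x = 0"
  by (induction xs x rule: succ_in.induct) auto

lemma succ_in_in_set: "succ_in xs x \<in> insert 0 (set xs)"
  by (induction xs x rule: succ_in.induct) auto

lemma succ_in_nth: "distinct xs \<Longrightarrow> Suc k < length xs \<Longrightarrow> succ_in xs (xs!k) = xs!Suc k"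
proof (induction k arbitrary: xs)
  case 0
  obtain a ys' where "xs = a # ys'" using 0(2) by (cases xs) auto
  moreover obtain b ys where "ys' = b # ys" using 0(2) \<open>xs = a # ys'\<close> by (cases ys') auto
  ultimately show ?case by simp
next
  case (Suc k)
  obtain a ys' where x1: "xs = a # ys'" using Suc(3) by (cases xs) auto
  obtain b ys where "ys' = b # ys" using Suc(3) x1 by (cases ys') auto
  with x1 have xs: "xs = a # b # ys" by simp
  have "k < length (b # ys)" using Suc.prems xs by simp
  then have "(b # ys) ! k \<noteq> a" using Suc.prems xs by (metis distinct.simps(2) nth_mem)
  then have "succ_in xs (xs ! Suc k) = succ_in (b # ys) ((b # ys) ! k)" using xs by simp
  also have "\<dots> = xs ! Suc (Suc k)" using Suc.IH[of "b # ys"] Suc.prems xs by simp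
  finally show ?case .
qed

lemma succ_in_last: "distinct xs \<Longrightarrow> xs \<noteq> [] \<Longrightarrow> succ_in xs (last xs) = 0"
proof (induction xs "last xs" rule: succ_in.induct)
  case (1 a b xs)
  have "last (b # xs) \<noteq> a" using "1.prems"(1) by (metis distinct.simps(2) last_in_set list.discI)
  then show ?case using 1 by simp
qed auto

lemma shift_along_succ_in: "distinct xs \<Longrightarrow> shift_along (succ_in xs) xs"
  unfolding shift_along_def using succ_in_nth succ_in_last by blast

section \<open>Linear maps on subspaces and traces\<close>

locale endo_space = vector_space scale + pair: vector_space_pair scale scale
  for scale :: "'k::field \<Rightarrow> 'v::ab_group_add \<Rightarrow> 'v"
begin

abbreviation lin :: "('v \<Rightarrow> 'v) \<Rightarrow> bool" where
  "lin g \<equiv> Vector_Spaces.linear scale scale g"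

lemma lin_onD:
  assumes "lin_on scale S T f"
  shows "x \<in> S \<Longrightarrow> f x \<in> T"
    and "x \<in> S \<Longrightarrow> y \<in> S \<Longrightarrow> f (x + y) = f x + f y"
    and "x \<in> S \<Longrightarrow> f (scale c x) = scale c (f x)"
  using assms unfolding lin_on_def by auto

lemma lin_on_zero:
  assumes f: "lin_on scale S T f" and S: "subspace S"
  shows "f 0 = 0"
proof -
  have "f (0 + 0) = f 0 + f 0" using lin_onD(2)[OF f] subspace_0[OF S] by blast
  then show ?thesis by simp
qed

lemma lin_on_diff:
  assumes f: "lin_on scale S T f" and S: "subspace S" and "x \<in> S" "y \<in> S"
  shows "f (x - y) = f x - f y"
proof -
  have "f (x - y) + f y = f (x - y + y)"
    using lin_onD(2)[OF f] subspace_diff[OF S] assms(3,4) by metis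
  then show ?thesis by (simp add: eq_diff_eq)
qed

lemma lin_on_lincomb:
  assumes f: "lin_on scale S T f" and S: "subspace S" and x: "\<And>i. i \<in> I \<Longrightarrow> x i \<in> S"
  shows "f (\<Sum>i\<in>I. scale (c i) (x i)) = (\<Sum>i\<in>I. scale (c i) (f (x i)))"
  using x
proof (induction I rule: infinite_finite_induct)
  case (insert a A)
  have "(\<Sum>i\<in>A. scale (c i) (x i)) \<in> S"
    using insert.prems by (intro subspace_sum[OF S] subspace_scale[OF S]) auto
  with insert show ?case
    using lin_onD[OF f] subspace_scale[OF S] by simp
qed (simp_all add: lin_on_zero[OF f S])

lemma lin_on_eq_on_span:
  assumes "finite B" "independent B"
    and "lin_on scale (span B) T f" "lin_on scale (span B) T' g"
    and "\<And>b. b \<in> B \<Longrightarrow> f b = g b" and "x \<in> span B"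
  shows "f x = g x"
proof -
  have x: "x = (\<Sum>b\<in>B. scale (representation B x b) b)"
    using sum_representation_eq[OF assms(2,6,1)] by simp
  have "f x = (\<Sum>b\<in>B. scale (representation B x b) (f b))"
    by (subst x, rule lin_on_lincomb[OF assms(3)]) (auto intro: span_base)
  also have "\<dots> = (\<Sum>b\<in>B. scale (representation B x b) (g b))" using assms(5) by simp
  also have "\<dots> = g x"
    by (subst (2) x, rule lin_on_lincomb[OF assms(4), symmetric]) (auto intro: span_base)
  finally show ?thesis .
qed

lemma linear_imp_lin_on: "lin g \<Longrightarrow> (\<And>x. x \<in> S \<Longrightarrow> g x \<in> T) \<Longrightarrow> lin_on scale S T g"
  unfolding lin_on_def using pair.linear_add pair.linear_scale by blast

lemma linear_imp_lin_on_UNIV: "lin g \<Longrightarrow> lin_on scale S UNIV g"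
  using linear_imp_lin_on by blast

lemma lin_on_comp: "lin_on scale S T f \<Longrightarrow> lin_on scale T R g \<Longrightarrow> lin_on scale S R (\<lambda>x. g (f x))"
  unfolding lin_on_def by auto

lemma lin_on_mono: "lin_on scale S T f \<Longrightarrow> S' \<subseteq> S \<Longrightarrow> T \<subseteq> T' \<Longrightarrow> lin_on scale S' T' f"
  unfolding lin_on_def by blast

lemma lin_on_add:
  "lin_on scale S T f \<Longrightarrow> lin_on scale S T g \<Longrightarrow> subspace T \<Longrightarrow> lin_on scale S T (\<lambda>x. f x + g x)"
  unfolding lin_on_def by (auto simp: subspace_add scale_right_distrib)

lemma lin_compose: "lin f \<Longrightarrow> lin g \<Longrightarrow> lin (\<lambda>x. g (f x))"
  using Vector_Spaces.linear_compose[of scale scale f scale g] by (simp add: o_def)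

lemma lin_on_image_subspace:
  assumes f: "lin_on scale S T f" and S: "subspace S"
  shows "subspace (f ` S)"
  unfolding subspace_def
proof (intro conjI ballI allI)
  show "0 \<in> f ` S" using lin_on_zero[OF f S] subspace_0[OF S] by force
  show "x + y \<in> f ` S" if "x \<in> f ` S" "y \<in> f ` S" for x y
    using that lin_onD(2)[OF f] subspace_add[OF S] by (auto simp: image_iff) (metis)
  show "scale c x \<in> f ` S" if "x \<in> f ` S" for c x
    using that lin_onD(3)[OF f] subspace_scale[OF S] by (auto simp: image_iff) (metis)
qed

lemma lin_on_kernel_subspace:
  assumes f: "lin_on scale S T f" and S: "subspace S"
  shows "subspace {x \<in> S. f x = 0}"
  unfolding subspace_def using lin_on_zero[OF f S] lin_onD[OF f]
  by (auto simp: subspace_0[OF S] subspace_add[OF S] subspace_scale[OF S])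

lemma extend_to_basis:
  assumes "subspace W" "S \<subseteq> W" "independent S"
  shows "\<exists>B. S \<subseteq> B \<and> independent B \<and> span B = W"
proof -
  obtain B where "S \<subseteq> B" "B \<subseteq> W" "independent B" "W \<subseteq> span B"
    using maximal_independent_subset_extend[OF assms(2,3)] by blast
  moreover have "span B \<subseteq> W" using \<open>B \<subseteq> W\<close> assms(1) span_minimal by blast
  ultimately show ?thesis by blast
qed

definition basis_projection :: "'v set \<Rightarrow> 'v set \<Rightarrow> 'v \<Rightarrow> 'v" where
  "basis_projection B A = pair.construct B (\<lambda>b. if b \<in> A then b else 0)"

lemma basis_projection:
  assumes B: "independent B" and A: "A \<subseteq> B"
  shows "lin (basis_projection B A)"
    and "basis_projection B A x \<in> span A"
    and "x \<in> span A \<Longrightarrow> basis_projection B A x = x"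
    and "x \<in> span (B - A) \<Longrightarrow> basis_projection B A x = 0"
proof -
  show lin: "lin (basis_projection B A)"
    unfolding basis_projection_def by (rule pair.linear_construct[OF B])
  have b: "basis_projection B A b = (if b \<in> A then b else 0)" if "b \<in> B" for b
    unfolding basis_projection_def using pair.construct_basis[OF B that] .
  have "(\<lambda>b. if b \<in> A then b else 0) ` B \<subseteq> span A" by (auto simp: span_base span_zero)
  then show "basis_projection B A x \<in> span A"
    using pair.construct_in_span[OF B] span_minimal[OF _ subspace_span]
    unfolding basis_projection_def by blast
  show "x \<in> span A \<Longrightarrow> basis_projection B A x = x"
    by (rule pair.linear_eq_on[OF lin linear_ident]) (use A b in auto)
  show "x \<in> span (B - A) \<Longrightarrow> basis_projection B A x = 0"
    by (rule pair.linear_eq_on[OF lin pair.linear_zero]) (use b in auto)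
qed

definition basis_trace :: "'v set \<Rightarrow> ('v \<Rightarrow> 'v) \<Rightarrow> 'k" where
  "basis_trace E f = (\<Sum>e\<in>E. representation E (f e) e)"

lemma representation_lin_on:
  assumes "independent E" "finite E" "independent E'" "x \<in> span E"
    and g: "lin_on scale (span E) (span E') g"
  shows "representation E' (g x) e = (\<Sum>c\<in>E. representation E x c * representation E' (g c) e)"
proof -
  have x: "x = (\<Sum>c\<in>E. scale (representation E x c) c)"
    using sum_representation_eq[OF assms(1,4,2)] by simp
  have gE': "g c \<in> span E'" if "c \<in> E" for c
    using lin_onD(1)[OF g] that by (simp add: span_base)
  have "g x = (\<Sum>c\<in>E. scale (representation E x c) (g c))"
    by (subst x, rule lin_on_lincomb[OF g]) (auto intro: span_base)
  then have "representation E' (g x) e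
      = (\<Sum>c\<in>E. representation E' (scale (representation E x c) (g c)) e)"
    using representation_sum[OF assms(3), where v="\<lambda>c. scale (representation E x c) (g c)" and I=E]
      gE' by (simp add: span_scale)
  also have "\<dots> = (\<Sum>c\<in>E. representation E x c * representation E' (g c) e)"
    using representation_scale[OF assms(3)] gE' by simp
  finally show ?thesis .
qed

lemma basis_trace_change_basis:
  assumes "finite E" "independent E" "finite E'" "independent E'" and span: "span E = span E'"
    and f: "lin_on scale (span E) (span E) f"
  shows "basis_trace E f = basis_trace E' f"
proof -
  have id: "lin_on scale (span E') (span E) (\<lambda>x. x)" using span unfolding lin_on_def by auto
  have fE: "f e \<in> span E'" if "e \<in> E" for e using lin_onD(1)[OF f] span span_base that by metis
  have E'E: "c \<in> span E" if "c \<in> E'" for c using span span_base that by metis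
  have f': "lin_on scale (span E) (span E') f" using f span by simp
  have "basis_trace E f = (\<Sum>e\<in>E. \<Sum>c\<in>E'. representation E' (f e) c * representation E c e)"
    unfolding basis_trace_def using representation_lin_on[OF assms(4,3,2) fE id] by simp
  also have "\<dots> = (\<Sum>c\<in>E'. \<Sum>e\<in>E. representation E c e * representation E' (f e) c)"
    by (subst sum.swap) (simp add: mult.commute)
  also have "\<dots> = basis_trace E' f"
    unfolding basis_trace_def using representation_lin_on[OF assms(2,1,4) E'E f']
    by simp
  finally show ?thesis .
qed

lemma basis_trace_commute:
  assumes "finite E" "independent E"
    and a: "lin_on scale (span E) (span E) a" and b: "lin_on scale (span E) (span E) b"
  shows "basis_trace E (\<lambda>x. a (b x)) = basis_trace E (\<lambda>x. b (a x))"
proof -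
  have ab: "a e \<in> span E" "b e \<in> span E" if "e \<in> E" for e
    using lin_onD(1)[OF a] lin_onD(1)[OF b] that by (auto intro: span_base)
  have "basis_trace E (\<lambda>x. a (b x)) = (\<Sum>e\<in>E. \<Sum>c\<in>E. representation E (b e) c * representation E (a c) e)"
    unfolding basis_trace_def using representation_lin_on[OF assms(2,1,2) ab(2) a] by simp
  also have "\<dots> = (\<Sum>e\<in>E. \<Sum>c\<in>E. representation E (a e) c * representation E (b c) e)"
    by (subst sum.swap) (simp add: mult.commute)
  also have "\<dots> = basis_trace E (\<lambda>x. b (a x))"
    unfolding basis_trace_def using representation_lin_on[OF assms(2,1,2) ab(1) b] by simp
  finally show ?thesis .
qed

lemma basis_trace_diff:
  assumes "independent E" "\<And>e. e \<in> E \<Longrightarrow> f e \<in> span E" "\<And>e. e \<in> E \<Longrightarrow> g e \<in> span E"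
  shows "basis_trace E (\<lambda>x. f x - g x) = basis_trace E f - basis_trace E g"
  unfolding basis_trace_def using representation_diff[OF assms(1)] assms(2,3)
  by (simp add: sum_subtractf)

lemma basis_trace_cong: "(\<And>e. e \<in> E \<Longrightarrow> f e = g e) \<Longrightarrow> basis_trace E f = basis_trace E g"
  unfolding basis_trace_def by simp

section \<open>Shoda's theorem\<close>

lemma linear_extension_list:
  assumes "distinct fs" "independent (set fs)" "subspace U" "\<And>k. k < length fs \<Longrightarrow> g k \<in> U"
  shows "\<exists>Y. lin Y \<and> (\<forall>x. Y x \<in> U) \<and> (\<forall>k<length fs. Y (fs!k) = g k)"
proof (intro exI conjI allI impI)
  let ?i = "the_inv_into {..<length fs} (nth fs)"
  define Y where "Y = pair.construct (set fs) (\<lambda>b. g (?i b))"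
  have idx: "?i (fs!k) = k" if "k < length fs" for k
    using the_inv_into_f_f[OF inj_on_nth[OF assms(1)]] that by auto
  show "lin Y" unfolding Y_def by (rule pair.linear_construct[OF assms(2)])
  show "Y (fs!k) = g k" if "k < length fs" for k
    unfolding Y_def using pair.construct_basis[OF assms(2)] that idx by simp
  have "(\<lambda>b. g (?i b)) ` set fs \<subseteq> U" using idx assms(4) by (auto simp: in_set_conv_nth)
  then show "Y x \<in> U" for x
    using pair.construct_in_span[OF assms(2)] span_minimal[OF _ assms(3)] unfolding Y_def by blast
qed

lemma succ_in_construct:
  assumes B: "independent B" and xs: "set xs \<subseteq> B" "distinct xs"
  defines "N \<equiv> pair.construct B (succ_in xs)"
  shows "lin N" and "shift_along N xs" and "N x \<in> span (set xs)"
    and "x \<in> span (B - set xs) \<Longrightarrow> N x = 0"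
proof -
  show lin: "lin N" unfolding N_def by (rule pair.linear_construct[OF B])
  have b: "N b = succ_in xs b" if "b \<in> B" for b
    unfolding N_def using pair.construct_basis[OF B that] .
  have "N x = succ_in xs x" if "x \<in> set xs" for x using b xs(1) that by blast
  then show "shift_along N xs"
    using shift_along_succ_in[OF xs(2)] unfolding shift_along_def by (simp add: last_in_set)
  have "succ_in xs b \<in> span (set xs)" for b
    using succ_in_in_set[of xs b] by (metis insert_iff span_base span_zero)
  then have "succ_in xs ` B \<subseteq> span (set xs)" by blast
  then show "N x \<in> span (set xs)"
    using pair.construct_in_span[OF B] span_minimal[OF _ subspace_span] unfolding N_def by blast
  show "x \<in> span (B - set xs) \<Longrightarrow> N x = 0"
    by (rule pair.linear_eq_on[OF lin pair.linear_zero]) (use b succ_in_notin in auto)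
qed

lemma shift_along_extension:
  assumes "lin Y" "shift_along N fs" "\<And>k. k < length fs \<Longrightarrow> Y (fs!k) = g k" "g (length fs) = 0"
    and "k < length fs"
  shows "Y (N (fs!k)) = g (Suc k)"
  using assms shift_along_nth[OF assms(2,5)] pair.linear_0[OF assms(1)]
  by (cases "Suc k = length fs") auto

lemma shift_span_drop:
  assumes N: "lin N" "shift_along N fs" and x: "x \<in> span (set (drop j fs))"
  shows "N x \<in> span (set (drop (Suc j) fs))"
proof -
  have "N ` set (drop j fs) \<subseteq> insert 0 (set (drop (Suc j) fs))"
    using shift_along_nth[OF N(2)] unfolding set_drop_conv_nth by auto
  then have "span (N ` set (drop j fs)) \<subseteq> span (set (drop (Suc j) fs))"
    by (metis span_insert_0 span_mono)
  then show ?thesis using pair.linear_span_image[OF N(1)] x by blast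
qed

lemma span_drop_leading_coeff:
  assumes dist: "distinct fs" and ind: "independent (set fs)" and k: "k < length fs"
    and y: "y \<in> span (set (drop k fs))"
  shows "y - scale (representation (set fs) y (fs!k)) (fs!k) \<in> span (set (drop (Suc k) fs))"
proof -
  define S where "S = set (drop (Suc k) fs)"
  have ins: "set (drop k fs) = insert (fs!k) S"
    unfolding S_def using Cons_nth_drop_Suc[OF k] by (metis list.simps(15))
  have aS: "fs!k \<notin> S"
    using Cons_nth_drop_Suc[OF k] distinct_drop[OF dist, of k] unfolding S_def
    by (metis distinct.simps(2))
  obtain t where t: "y - scale t (fs!k) \<in> span S" using y unfolding ins span_breakdown_eq by blast
  have Ssub: "S \<subseteq> set fs" unfolding S_def by (rule set_drop_subset)
  have a: "fs!k \<in> set fs" using k by simp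
  have s: "y - scale t (fs!k) \<in> span (set fs)" using t span_mono[OF Ssub] by blast
  have y': "y \<in> span (set fs)" using s a by (metis diff_add_cancel span_add span_base span_scale)
  have "representation (set fs) (y - scale t (fs!k)) (fs!k) = 0"
    using representation_extend[OF ind t Ssub] representation_ne_zero aS by metis
  then have "representation (set fs) y (fs!k) = t"
    using representation_diff[OF ind span_scale[OF span_base[OF a]] y']
      representation_scale[OF ind span_base[OF a]] representation_basis[OF ind a] by simp
  then show ?thesis using t unfolding S_def by simp
qed

text \<open>The recursion computes a solution \<open>Y (fs!j) = y j\<close> of \<open>N Y - Y N = B\<close> along the list;
  it closes up, \<open>y (length fs) = 0\<close>, exactly because the diagonal of \<open>B\<close> sums to zero.\<close>
lemma shift_recursion_vanishes:
  assumes N: "lin N" "shift_along N fs"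
    and B: "\<And>k. k < length fs \<Longrightarrow> B (fs!k) - scale (c k) (fs!k) \<in> span (set (drop (Suc k) fs))"
    and tr: "(\<Sum>k<length fs. c k) = 0"
    and y: "y 0 = 0" "\<And>j. y (Suc j) = N (y j) - B (fs!j)"
  shows "y (length fs) = 0"
proof (cases "length fs")
  case (Suc m)
  have inv: "y (Suc j) + scale (\<Sum>l\<le>j. c l) (fs!j) \<in> span (set (drop (Suc j) fs))"
    if "j < length fs" for j
    using that
  proof (induction j)
    case 0
    have "y (Suc 0) + scale (\<Sum>l\<le>0. c l) (fs!0) = - (B (fs!0) - scale (c 0) (fs!0))"
      using y pair.linear_0[OF N(1)] by simp
    then show ?case using B[OF 0] span_neg by metis
  next
    case (Suc j)
    define s where "s = y (Suc j) + scale (\<Sum>l\<le>j. c l) (fs!j)"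
    have "N s = N (y (Suc j)) + scale (\<Sum>l\<le>j. c l) (fs!Suc j)"
      unfolding s_def using pair.linear_add[OF N(1)] pair.linear_scale[OF N(1)]
        shift_along_nth[OF N(2), of j] Suc.prems by simp
    then have "y (Suc (Suc j)) + scale (\<Sum>l\<le>Suc j. c l) (fs!Suc j)
        = N s - (B (fs!Suc j) - scale (c (Suc j)) (fs!Suc j))"
      by (simp add: y(2) scale_left_distrib algebra_simps)
    moreover have "N s \<in> span (set (drop (Suc (Suc j)) fs))"
      using shift_span_drop[OF N] Suc unfolding s_def by simp
    ultimately show ?case using span_diff B[OF Suc.prems] by simp
  qed
  have "(\<Sum>l\<le>m. c l) = 0" using tr Suc by (simp add: lessThan_Suc_atMost)
  then show ?thesis using inv[of m] Suc by simp
qed (simp add: y)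

lemma commutator_with_shift:
  assumes dist: "distinct fs" and ind: "independent (set fs)" and N: "lin N" "shift_along N fs"
    and B: "lin_on scale (span (set fs)) (span (set fs)) B"
    and Bk: "\<And>k. k < length fs \<Longrightarrow> B (fs!k) - scale (c k) (fs!k) \<in> span (set (drop (Suc k) fs))"
    and tr: "(\<Sum>k<length fs. c k) = 0"
  shows "\<exists>Y. lin Y \<and> (\<forall>x. Y x \<in> span (set fs)) \<and>
    (\<forall>x\<in>span (set fs). N (Y x) - Y (N x) = B x)"
proof -
  define y where "y = rec_nat 0 (\<lambda>j y. N y - B (fs!j))"
  have y: "y 0 = 0" "y (Suc j) = N (y j) - B (fs!j)" for j unfolding y_def by simp_all
  have yn: "y (length fs) = 0" by (rule shift_recursion_vanishes[OF N Bk tr y])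
  have Nspan: "N x \<in> span (set fs)" if "x \<in> span (set fs)" for x
    using shift_span_drop[OF N, of x 0] that span_mono[OF set_drop_subset] by fastforce
  have yin: "y j \<in> span (set fs)" if "j < length fs" for j
    using that by (induction j) (auto simp: y Nspan span_diff lin_onD(1)[OF B] span_base span_zero)
  obtain Y where Y: "lin Y" "\<And>x. Y x \<in> span (set fs)" "\<And>k. k < length fs \<Longrightarrow> Y (fs!k) = y k"
    using linear_extension_list[where g=y, OF dist ind subspace_span yin] by blast
  have basis: "N (Y b) - Y (N b) = B b" if "b \<in> set fs" for b
  proof -
    obtain k where k: "k < length fs" "b = fs!k" using \<open>b \<in> set fs\<close> by (auto simp: in_set_conv_nth)
    then show ?thesis using shift_along_extension[OF Y(1) N(2) Y(3) yn k(1)] Y(3) y(2) by simp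
  qed
  have lin: "lin_on scale (span (set fs)) UNIV (\<lambda>x. N (Y x) - Y (N x))"
    using pair.linear_compose_sub[OF lin_compose[OF Y(1) N(1)] lin_compose[OF N(1) Y(1)]]
    by (rule linear_imp_lin_on_UNIV)
  have "N (Y x) - Y (N x) = B x" if "x \<in> span (set fs)" for x
    by (rule lin_on_eq_on_span[OF _ ind lin B basis that]) simp
  with Y(1,2) show ?thesis by blast
qed

text \<open>Since \<open>T\<close> is invertible on \<open>U\<close> and \<open>N\<close> is nilpotent, the equation can be solved
  on the list from its end.\<close>
lemma sylvester_with_shift:
  assumes dist: "distinct fs" and ind: "independent (set fs)" and N: "lin N" "shift_along N fs"
    and T: "lin T" and U: "subspace U" and R: "\<And>y. y \<in> U \<Longrightarrow> R y \<in> U" "\<And>y. y \<in> U \<Longrightarrow> T (R y) = y"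
    and C: "lin_on scale (span (set fs)) U C"
  shows "\<exists>Z. lin Z \<and> (\<forall>x. Z x \<in> U) \<and>
    (\<forall>x\<in>span (set fs). T (Z x) - Z (scale d (N x)) = C x)"
proof -
  have CU: "C (fs!k) + scale d z \<in> U" if "k < length fs" "z \<in> U" for k z
    using that lin_onD(1)[OF C] by (simp add: span_base subspace_add[OF U] subspace_scale[OF U])
  have step: "R (C (fs!k) + scale d z) \<in> U" if "k < length fs" "z \<in> U" for k z
    using that CU R(1) by blast
  obtain z where z: "z (length fs) = 0" "\<And>k. k < length fs \<Longrightarrow> z k = R (C (fs!k) + scale d (z (Suc k)))"
    "\<And>k. k \<le> length fs \<Longrightarrow> z k \<in> U"
    using backward_recursion[where P="\<lambda>z. z \<in> U" and n="length fs"
      and F="\<lambda>k z. R (C (fs!k) + scale d z)", OF subspace_0[OF U] step] by blast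
  have zU: "z k \<in> U" if "k < length fs" for k using z(3) that by simp
  obtain Z where Z: "lin Z" "\<And>x. Z x \<in> U" "\<And>k. k < length fs \<Longrightarrow> Z (fs!k) = z k"
    using linear_extension_list[where g=z, OF dist ind U zU] by blast
  have "T (Z b) - Z (scale d (N b)) = C b" if "b \<in> set fs" for b
  proof -
    obtain k where k: "k < length fs" "b = fs!k" using \<open>b \<in> set fs\<close> by (auto simp: in_set_conv_nth)
    have "Z (scale d (N b)) = scale d (z (Suc k))"
      using shift_along_extension[OF Z(1) N(2) Z(3) z(1) k(1)] pair.linear_scale[OF Z(1)] k by simp
    moreover have "T (Z b) = C b + scale d (z (Suc k))"
      using k Z(3) z(2)[OF k(1)] R(2) CU z(3)[of "Suc k"] by simp
    ultimately show ?thesis by simp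
  qed
  moreover have "lin_on scale (span (set fs)) UNIV (\<lambda>x. T (Z x) - Z (scale d (N x)))"
    using pair.linear_compose_sub[OF lin_compose[OF Z(1) T]
        lin_compose[OF pair.linear_compose_scale_right[OF N(1)] Z(1)]]
    by (rule linear_imp_lin_on_UNIV)
  ultimately have "T (Z x) - Z (scale d (N x)) = C x" if "x \<in> span (set fs)" for x
    using lin_on_eq_on_span[OF _ ind _ C _ that] by simp
  with Z(1,2) show ?thesis by blast
qed

lemma one_plus_shift_invertible:
  assumes dist: "distinct gs" and ind: "independent (set gs)" and M: "lin M" "shift_along M gs"
  shows "\<exists>R. (\<forall>y. R y \<in> span (set gs)) \<and> (\<forall>y\<in>span (set gs). R y + scale c (M (R y)) = y)"
proof -
  let ?n = "length gs"
  have step: "gs!k - scale c z \<in> span (set gs)" if "k < ?n" "z \<in> span (set gs)" for k z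
    using that by (simp add: span_base span_diff span_scale)
  obtain r where r: "r ?n = 0" "\<And>k. k < ?n \<Longrightarrow> r k = gs!k - scale c (r (Suc k))"
    "\<And>k. k \<le> ?n \<Longrightarrow> r k \<in> span (set gs)"
    using backward_recursion[where P="\<lambda>z. z \<in> span (set gs)" and n="?n"
      and F="\<lambda>k z. gs!k - scale c z", OF span_zero step] by blast
  have key: "r k + scale c (M (r k)) = (if k < ?n then gs!k else 0)" if "k \<le> ?n" for k
    using that
  proof (induction "?n - k" arbitrary: k)
    case 0
    then show ?case using r(1) pair.linear_0[OF M(1)] by simp
  next
    case (Suc m)
    then have k: "k < ?n" by simp
    define r' where "r' = r (Suc k)"
    have Mg: "M (gs!k) = r' + scale c (M r')"
      using Suc.hyps(1)[of "Suc k"] Suc.hyps(2) k shift_along_nth[OF M(2) k] unfolding r'_def by simp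
    have rk: "r k = gs!k - scale c r'" using r(2)[OF k] unfolding r'_def .
    then have "M (r k) = M (gs!k) - scale c (M r')"
      using pair.linear_diff[OF M(1)] pair.linear_scale[OF M(1)] by simp
    then show ?case using k unfolding Mg by (simp add: rk algebra_simps)
  qed
  have rspan: "r k \<in> span (set gs)" if "k < ?n" for k using r(3) that by simp
  obtain R where R: "lin R" "\<And>x. R x \<in> span (set gs)" "\<And>k. k < ?n \<Longrightarrow> R (gs!k) = r k"
    using linear_extension_list[where g=r, OF dist ind subspace_span rspan] by blast
  have basis: "R b + scale c (M (R b)) = b" if "b \<in> set gs" for b
    using that key R(3) by (auto simp: in_set_conv_nth)
  have lin: "lin_on scale (span (set gs)) UNIV (\<lambda>y. R y + scale c (M (R y)))"
    using pair.linear_compose_add[OF R(1) pair.linear_compose_scale_right[OF lin_compose[OF R(1) M(1)]]]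
    by (rule linear_imp_lin_on_UNIV)
  have "R y + scale c (M (R y)) = y" if "y \<in> span (set gs)" for y
    by (rule lin_on_eq_on_span[OF _ ind lin linear_imp_lin_on_UNIV[OF linear_ident] basis that]) simp
  with R(2) show ?thesis by blast
qed

lemma krylov_powers_in_span:
  "lin_on scale (span E) (span E) f \<Longrightarrow> v \<in> span E \<Longrightarrow> (f^^i) v \<in> span E"
  by (induction i) (auto intro: lin_onD(1))

lemma krylov_independent:
  assumes zs: "distinct zs" "independent (set zs)"
    and new: "\<forall>i<j. (f^^i) v \<notin> span (set zs \<union> (\<lambda>i. (f^^i) v) ` {..<i})"
  shows "independent (set zs \<union> (\<lambda>i. (f^^i) v) ` {..<j}) \<and>
    card (set zs \<union> (\<lambda>i. (f^^i) v) ` {..<j}) = length zs + j"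
  using new
proof (induction j)
  case 0
  then show ?case using zs by (simp add: distinct_card)
next
  case (Suc j)
  let ?G = "set zs \<union> (\<lambda>i. (f^^i) v) ` {..<j}"
  have IH: "independent ?G" "card ?G = length zs + j" using Suc.IH Suc.prems by auto
  have "(f^^j) v \<notin> span ?G" using Suc.prems lessI by blast
  moreover from this have "(f^^j) v \<notin> ?G" by (rule contrapos_nn) (rule span_base)
  moreover have "set zs \<union> (\<lambda>i. (f^^i) v) ` {..<Suc j} = insert ((f^^j) v) ?G"
    by (auto simp: lessThan_Suc)
  ultimately show ?case using IH independent_insertI by simp
qed

lemma krylov_extension:
  assumes f: "lin_on scale (span E) (span E) f" and E: "finite E"
    and zs: "distinct zs" "independent (set zs)" "set zs \<subseteq> span E"
    and v: "v \<in> span E" "v \<notin> span (set zs)"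
  shows "\<exists>e. let ks = map (\<lambda>i. (f^^i) v) [0..<Suc e] in
    distinct (zs @ ks) \<and> independent (set (zs @ ks)) \<and> (f^^Suc e) v \<in> span (set (zs @ ks))"
proof -
  define G where "G j = set zs \<union> (\<lambda>i. (f^^i) v) ` {..<j}" for j
  define Q where "Q j \<longleftrightarrow> (f^^j) v \<in> span (G j)" for j
  have indG: "independent (G j) \<and> card (G j) = length zs + j" if "\<forall>i<j. \<not> Q i" for j
    unfolding G_def by (rule krylov_independent[OF zs(1,2)]) (use that in \<open>simp add: Q_def G_def\<close>)
  have "\<exists>j. Q j"
  proof (rule ccontr)
    assume "\<nexists>j. Q j"
    then have "independent (G (Suc (card E)))" "card (G (Suc (card E))) = length zs + Suc (card E)"
      using indG by auto
    moreover have "G (Suc (card E)) \<subseteq> span E"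
      unfolding G_def using zs(3) krylov_powers_in_span[OF f v(1)] by auto
    ultimately show False using independent_span_bound[OF E] by fastforce
  qed
  define d where "d = (LEAST j. Q j)"
  have Qd: "Q d" unfolding d_def using \<open>\<exists>j. Q j\<close> by (rule LeastI_ex)
  have indd: "independent (G d)" "card (G d) = length zs + d"
    using indG not_less_Least unfolding d_def by blast+
  have "d \<noteq> 0" using Qd v(2) unfolding Q_def G_def by (auto intro: Nat.gr0I)
  then obtain e where de: "d = Suc e" by (cases d) auto
  define ks where "ks = map (\<lambda>i. (f^^i) v) [0..<Suc e]"
  have "set (zs @ ks) = set zs \<union> (\<lambda>i. (f^^i) v) ` set [0..<Suc e]"
    unfolding ks_def set_append set_map ..
  also have "set [0..<Suc e] = {..<d}" unfolding de by (simp add: atLeast0LessThan lessThan_Suc)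
  finally have setks: "set (zs @ ks) = G d" unfolding G_def .
  then have "distinct (zs @ ks)" using indd(2) by (intro card_distinct) (simp add: ks_def de)
  then show ?thesis using setks indd(1) Qd unfolding Let_def Q_def de by (intro exI[of _ e]) (simp add: ks_def)
qed

text \<open>For such a basis the diagonal blocks of \<open>f\<close> with respect to
  \<open>span (set us) \<oplus> span (set ws)\<close> are strictly triangular, resp. triangular.\<close>
definition shoda_basis :: "('v \<Rightarrow> 'v) \<Rightarrow> 'v list \<Rightarrow> 'v list \<Rightarrow> bool" where
  "shoda_basis f us ws \<longleftrightarrow> distinct (us @ ws) \<and> independent (set (us @ ws)) \<and>
     (\<forall>k<length us. (Suc k < length us \<and> f (us!k) = us!Suc k) \<or> f (us!k) \<in> set ws) \<and>
     (\<forall>k<length ws. f (ws!k) \<in> span (set us \<union> set (drop k ws)))"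

lemma shoda_basis_append_chain:
  fixes f :: "'v \<Rightarrow> 'v" and v :: 'v and e :: nat
  defines "ks \<equiv> map (\<lambda>i. (f^^i) v) [0..<Suc e]"
  assumes B: "shoda_basis f us ws" and dist: "distinct (us @ ws @ ks)"
    and ind: "independent (set (us @ ws @ ks))" and closed: "(f^^Suc e) v \<in> span (set (us @ ws @ ks))"
  shows "shoda_basis f (us @ map (\<lambda>i. (f^^i) v) [0..<e]) ((f^^e) v # ws)"
    (is "shoda_basis f ?us ?ws")
proof -
  have set: "set (?us @ ?ws) = set (us @ ws @ ks)" unfolding ks_def by auto
  have len: "length (?us @ ?ws) = length (us @ ws @ ks)" by (simp add: ks_def)
  have "distinct (?us @ ?ws)"
    by (rule card_distinct) (simp only: set len distinct_card[OF dist])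
  moreover have "(Suc k < length ?us \<and> f (?us!k) = ?us!Suc k) \<or> f (?us!k) \<in> set ?ws"
    if k: "k < length ?us" for k
  proof (cases "k < length us")
    case True
    then show ?thesis using B unfolding shoda_basis_def by (auto simp: nth_append)
  next
    case False
    define i where "i = k - length us"
    have i: "k = length us + i" "i < e" using False k unfolding i_def by auto
    have fk: "f (?us!k) = (f^^Suc i) v" using i by (simp add: nth_append)
    show ?thesis
    proof (cases "Suc i < e")
      case True
      then show ?thesis using fk i by (simp add: nth_append del: funpow.simps)
    next
      case False
      then have "Suc i = e" using i by simp
      then show ?thesis using fk by (simp del: funpow.simps)
    qed
  qed
  moreover have "f (?ws!k) \<in> span (set ?us \<union> set (drop k ?ws))" if k: "k < length ?ws" for k
  proof (cases k)
    case 0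
    then have "f (?ws!k) = (f^^Suc e) v" "set ?us \<union> set (drop k ?ws) = set (us @ ws @ ks)"
      using set by (simp, simp add: Un_assoc)
    then show ?thesis using closed by (simp only:)
  next
    case (Suc j)
    then have "f (ws!j) \<in> span (set us \<union> set (drop j ws))"
      using B k unfolding shoda_basis_def by simp
    moreover have "set us \<union> set (drop j ws) \<subseteq> set ?us \<union> set (drop k ?ws)" using Suc by auto
    moreover have "?ws!k = ws!j" using Suc by simp
    ultimately show ?thesis using span_mono by (metis subsetD)
  qed
  ultimately show ?thesis using ind unfolding shoda_basis_def set by blast
qed

lemma shoda_basis_exists:
  assumes f: "lin_on scale (span E) (span E) f" and E: "finite E"
  shows "\<exists>us ws. shoda_basis f us ws \<and> set (us @ ws) \<subseteq> span E \<and> span (set (us @ ws)) = span E"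
proof -
  have "\<exists>us ws. shoda_basis f us ws \<and> set (us @ ws) \<subseteq> span E \<and> span (set (us @ ws)) = span E"
    if "shoda_basis f us ws" "set (us @ ws) \<subseteq> span E" for us ws
    using that
  proof (induction "card E - length (us @ ws)" arbitrary: us ws rule: less_induct)
    case less
    have B: "distinct (us @ ws)" "independent (set (us @ ws))"
      using less.prems(1) unfolding shoda_basis_def by auto
    show ?case
    proof (cases "span (set (us @ ws)) = span E")
      case False
      moreover have "span (set (us @ ws)) \<subseteq> span E" using less.prems(2) by (simp add: span_minimal)
      ultimately obtain v where v: "v \<in> span E" "v \<notin> span (set (us @ ws))" by blast
      obtain e where "let ks = map (\<lambda>i. (f^^i) v) [0..<Suc e] in distinct ((us @ ws) @ ks) \<and>
          independent (set ((us @ ws) @ ks)) \<and> (f^^Suc e) v \<in> span (set ((us @ ws) @ ks))"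
        using krylov_extension[OF f E B less.prems(2) v] by blast
      then have "shoda_basis f (us @ map (\<lambda>i. (f^^i) v) [0..<e]) ((f^^e) v # ws)"
        (is "shoda_basis f ?us ?ws") unfolding Let_def by (intro shoda_basis_append_chain less.prems(1)) auto
      moreover have sub: "set (?us @ ?ws) \<subseteq> span E"
        using less.prems(2) v(1) krylov_powers_in_span[OF f v(1)] by auto
      moreover have "card E - length (?us @ ?ws) < card E - length (us @ ws)"
      proof -
        have "distinct (?us @ ?ws)" "independent (set (?us @ ?ws))"
          using \<open>shoda_basis f ?us ?ws\<close> unfolding shoda_basis_def by auto
        then have "length (?us @ ?ws) \<le> card E"
          using independent_span_bound[OF E _ sub] distinct_card by metis
        then show ?thesis by simp
      qed
      ultimately show ?thesis using less.hyps by blast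
    qed (use less.prems in blast)
  qed
  moreover have "shoda_basis f [] []" unfolding shoda_basis_def by (simp add: independent_empty)
  ultimately show ?thesis by fastforce
qed

end

locale shoda_decomposition = endo_space scale for scale :: "'k::field \<Rightarrow> 'v::ab_group_add \<Rightarrow> 'v" +
  fixes f :: "'v \<Rightarrow> 'v" and us ws :: "'v list"
  assumes shoda_basis: "shoda_basis f us ws"
    and f_lin: "lin_on scale (span (set (us @ ws))) (span (set (us @ ws))) f"
begin

abbreviation "B \<equiv> set (us @ ws)"
abbreviation "U1 \<equiv> span (set us)"
abbreviation "U2 \<equiv> span (set ws)"

definition P1 :: "'v \<Rightarrow> 'v" where "P1 = basis_projection B (set us)"
definition P2 :: "'v \<Rightarrow> 'v" where "P2 = basis_projection B (set ws)"
definition N1 :: "'v \<Rightarrow> 'v" where "N1 = pair.construct B (succ_in us)"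
definition N2 :: "'v \<Rightarrow> 'v" where "N2 = pair.construct B (succ_in ws)"

lemma distinct_us: "distinct us" and distinct_ws: "distinct ws"
  and disjoint: "set us \<inter> set ws = {}" and independent_B: "independent B"
  using shoda_basis unfolding shoda_basis_def by auto

lemma independent_us: "independent (set us)" and independent_ws: "independent (set ws)"
  using independent_B dependent_mono by (metis set_append sup_ge1, metis set_append sup_ge2)

lemma B_minus_us: "B - set us = set ws" and B_minus_ws: "B - set ws = set us"
  using disjoint by auto

lemma U1_sub: "U1 \<subseteq> span B" and U2_sub: "U2 \<subseteq> span B"
  by (simp_all add: span_mono)

lemma P1: "lin P1" "P1 x \<in> U1" "x \<in> U1 \<Longrightarrow> P1 x = x" "x \<in> U2 \<Longrightarrow> P1 x = 0"
  using basis_projection[OF independent_B, of "set us"] B_minus_us unfolding P1_def by auto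

lemma P2: "lin P2" "P2 x \<in> U2" "x \<in> U2 \<Longrightarrow> P2 x = x" "x \<in> U1 \<Longrightarrow> P2 x = 0"
  using basis_projection[OF independent_B, of "set ws"] B_minus_ws unfolding P2_def by auto

lemma P1_add_P2: "x \<in> span B \<Longrightarrow> P1 x + P2 x = x"
proof (rule pair.linear_eq_on[OF pair.linear_compose_add[OF P1(1) P2(1)] linear_ident])
  fix b assume "b \<in> B"
  then show "P1 b + P2 b = b" using P1(3,4) P2(3,4) by (auto simp: span_base)
qed

lemma N1: "lin N1" "shift_along N1 us" "N1 x \<in> U1" "x \<in> U2 \<Longrightarrow> N1 x = 0"
  using succ_in_construct[OF independent_B _ distinct_us] B_minus_us unfolding N1_def by auto

lemma N2: "lin N2" "shift_along N2 ws" "N2 x \<in> U2" "x \<in> U1 \<Longrightarrow> N2 x = 0"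
  using succ_in_construct[OF independent_B _ distinct_ws] B_minus_ws unfolding N2_def by auto

lemma f_us: "k < length us \<Longrightarrow> (Suc k < length us \<and> f (us!k) = us!Suc k) \<or> f (us!k) \<in> set ws"
  and f_ws: "k < length ws \<Longrightarrow> f (ws!k) \<in> span (set us \<union> set (drop k ws))"
  using shoda_basis unfolding shoda_basis_def by auto

lemma f_lin_on: "S \<subseteq> span B \<Longrightarrow> lin P \<Longrightarrow> (\<And>x. P x \<in> T) \<Longrightarrow> lin_on scale S T (\<lambda>x. P (f x))"
  using lin_on_comp[OF lin_on_mono[OF f_lin] linear_imp_lin_on] by blast

lemma diagonal_block_us:
  "\<exists>Y. lin Y \<and> (\<forall>x. Y x \<in> U1) \<and> (\<forall>x\<in>U1. N1 (Y x) - Y (N1 x) = P1 (f x))"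
proof -
  have "P1 (f (us!k)) - scale 0 (us!k) \<in> span (set (drop (Suc k) us))" if "k < length us" for k
    using f_us[OF that]
  proof
    assume *: "Suc k < length us \<and> f (us!k) = us!Suc k"
    then have "P1 (f (us!k)) = us!Suc k" using P1(3) by (simp add: span_base)
    moreover have "us!Suc k \<in> set (drop (Suc k) us)" using * by (auto simp: set_drop_conv_nth)
    ultimately show ?thesis by (simp add: span_base)
  qed (simp add: P1(4) span_base span_zero)
  with commutator_with_shift[OF distinct_us independent_us N1(1,2) f_lin_on[OF U1_sub P1(1,2)],
      where c="\<lambda>_. 0"]
  show ?thesis by simp
qed

lemma diagonal_entry_us:
  assumes "b \<in> set us" shows "representation B (f b) b = 0"
proof -
  obtain k where k: "k < length us" "b = us!k" using assms by (auto simp: in_set_conv_nth)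
  have "f b \<in> B \<and> f b \<noteq> b"
    using f_us[OF k(1)]
  proof
    assume "Suc k < length us \<and> f (us!k) = us!Suc k"
    then show ?thesis using k distinct_us nth_mem by (fastforce simp: nth_eq_iff_index_eq)
  next
    assume "f (us!k) \<in> set ws"
    moreover have "b \<notin> set ws" using assms disjoint by blast
    ultimately show ?thesis using k by auto
  qed
  then show ?thesis using representation_basis[OF independent_B, of "f b"] by auto
qed

lemma diagonal_entry_ws:
  assumes b: "b \<in> set ws" shows "representation B (f b) b = representation (set ws) (P2 (f b)) b"
proof -
  have "f b \<in> span B" using lin_onD(1)[OF f_lin] b by (simp add: span_base)
  then have fb: "f b = P1 (f b) + P2 (f b)" using P1_add_P2 by simp
  have "representation B (P1 (f b)) b = representation (set us) (P1 (f b)) b"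
    using representation_extend[OF independent_B P1(2)] by simp
  also have "\<dots> = 0" using representation_ne_zero b disjoint by blast
  finally have "representation B (P1 (f b)) b = 0" .
  moreover have "representation B (P2 (f b)) = representation (set ws) (P2 (f b))"
    using representation_extend[OF independent_B P2(2)] by simp
  moreover have "representation B (P1 (f b) + P2 (f b))
      = (\<lambda>c. representation B (P1 (f b)) c + representation B (P2 (f b)) c)"
    by (rule representation_add[OF independent_B]) (use U1_sub U2_sub P1(2) P2(2) in blast)+
  then have "representation B (f b)
      = (\<lambda>c. representation B (P1 (f b)) c + representation B (P2 (f b)) c)"
    by (simp add: fb[symmetric])
  ultimately show ?thesis by simp
qed

lemma trace_eq_trace_ws_block:
  "basis_trace B f = (\<Sum>b\<in>set ws. representation (set ws) (P2 (f b)) b)"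
proof -
  have "basis_trace B f = (\<Sum>b\<in>set us. representation B (f b) b) + (\<Sum>b\<in>set ws. representation B (f b) b)"
    unfolding basis_trace_def set_append using disjoint by (simp add: sum.union_disjoint)
  then show ?thesis using diagonal_entry_us diagonal_entry_ws by simp
qed

lemma P2_span: "S \<subseteq> set ws \<Longrightarrow> y \<in> span (set us \<union> S) \<Longrightarrow> P2 y \<in> span S"
proof -
  assume S: "S \<subseteq> set ws" and y: "y \<in> span (set us \<union> S)"
  have "P2 ` (set us \<union> S) \<subseteq> insert 0 S" using P2(3,4) S by (auto simp: span_base)
  then have "span (P2 ` (set us \<union> S)) \<subseteq> span S" by (metis span_insert_0 span_mono)
  then show ?thesis using pair.linear_span_image[OF P2(1)] y by blast
qed

lemma diagonal_block_ws:
  assumes "basis_trace B f = 0"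
  shows "\<exists>Y. lin Y \<and> (\<forall>x. Y x \<in> U2) \<and> (\<forall>x\<in>U2. N2 (Y x) - Y (N2 x) = P2 (f x))"
proof -
  define c where "c k = representation (set ws) (P2 (f (ws!k))) (ws!k)" for k
  have "P2 (f (ws!k)) - scale (c k) (ws!k) \<in> span (set (drop (Suc k) ws))" if "k < length ws" for k
    unfolding c_def
    by (rule span_drop_leading_coeff[OF distinct_ws independent_ws that P2_span[OF set_drop_subset f_ws[OF that]]])
  moreover have "(\<Sum>k<length ws. c k) = 0"
    using assms trace_eq_trace_ws_block
    by (simp add: c_def sum.distinct_set_conv_list[OF distinct_ws] sum_list_sum_nth atLeast0LessThan)
  ultimately show ?thesis
    using commutator_with_shift[OF distinct_ws independent_ws N2(1,2) f_lin_on[OF U2_sub P2(1,2)]]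
    by blast
qed

lemma off_diagonal_block_us_ws:
  "\<exists>Z. lin Z \<and> (\<forall>x. Z x \<in> U2) \<and> (\<forall>x\<in>U1. Z x + N2 (Z x) - Z (N1 x) = P2 (f x))"
proof -
  obtain R where R: "\<forall>y. R y \<in> U2" "\<forall>y\<in>U2. R y + scale 1 (N2 (R y)) = y"
    using one_plus_shift_invertible[OF distinct_ws independent_ws N2(1,2), of 1] by blast
  have T: "lin (\<lambda>y. y + scale 1 (N2 y))"
    using pair.linear_compose_add[OF linear_ident pair.linear_compose_scale_right[OF N2(1)]] .
  show ?thesis
    using sylvester_with_shift[OF distinct_us independent_us N1(1,2) T subspace_span, where R=R,
        OF _ _ f_lin_on[OF U1_sub P2(1,2)], where d=1] R by simp
qed

lemma off_diagonal_block_ws_us: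
  "\<exists>Z. lin Z \<and> (\<forall>x. Z x \<in> U1) \<and> (\<forall>x\<in>U2. N1 (Z x) - (Z x + Z (N2 x)) = P1 (f x))"
proof -
  obtain R where R: "\<forall>y. R y \<in> U1" "\<forall>y\<in>U1. R y + scale (-1) (N1 (R y)) = y"
    using one_plus_shift_invertible[OF distinct_us independent_us N1(1,2), of "-1"] by blast
  have T: "lin (\<lambda>y. y + scale (-1) (N1 y))"
    using pair.linear_compose_add[OF linear_ident pair.linear_compose_scale_right[OF N1(1)]] .
  have C: "lin_on scale U2 U1 (\<lambda>x. scale (-1) (P1 (f x)))"
    by (rule f_lin_on[OF U2_sub pair.linear_compose_scale_right[OF P1(1)]]) (simp add: span_neg P1(2))
  obtain Z where Z: "lin Z" "\<forall>x. Z x \<in> U1"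
    "\<forall>x\<in>U2. (Z x + scale (-1) (N1 (Z x))) - Z (scale (-1) (N2 x)) = scale (-1) (P1 (f x))"
    using sylvester_with_shift[OF distinct_ws independent_ws N2(1,2) T subspace_span, where R=R, OF _ _ C,
        where d="-1"] R by auto
  have "N1 (Z x) - (Z x + Z (N2 x)) = P1 (f x)" if "x \<in> U2" for x
    using Z(3) that pair.linear_neg[OF Z(1)] by (auto simp: algebra_simps)
  with Z(1,2) show ?thesis by blast
qed

lemma projections_of_sum: "u \<in> U1 \<Longrightarrow> w \<in> U2 \<Longrightarrow> P1 (u + w) = u \<and> P2 (u + w) = w"
  using pair.linear_add[OF P1(1)] pair.linear_add[OF P2(1)] P1(3,4) P2(3,4) by simp

lemma commutator_from_blocks:
  assumes Y1: "lin Y1" "\<forall>x. Y1 x \<in> U1" "\<forall>x\<in>U1. N1 (Y1 x) - Y1 (N1 x) = P1 (f x)"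
    and Y2: "lin Y2" "\<forall>x. Y2 x \<in> U2" "\<forall>x\<in>U2. N2 (Y2 x) - Y2 (N2 x) = P2 (f x)"
    and Z21: "lin Z21" "\<forall>x. Z21 x \<in> U2" "\<forall>x\<in>U1. Z21 x + N2 (Z21 x) - Z21 (N1 x) = P2 (f x)"
    and Z12: "lin Z12" "\<forall>x. Z12 x \<in> U1" "\<forall>x\<in>U2. N1 (Z12 x) - (Z12 x + Z12 (N2 x)) = P1 (f x)"
    and x: "x \<in> span B"
  defines "X \<equiv> \<lambda>x. N1 (P1 x) + (P2 x + N2 (P2 x))"
    and "Y \<equiv> \<lambda>x. (Y1 (P1 x) + Z12 (P2 x)) + (Z21 (P1 x) + Y2 (P2 x))"
  shows "f x = X (Y x) - Y (X x)"
proof -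
  define x1 x2 where "x1 = P1 x" and "x2 = P2 x"
  have x12: "x1 \<in> U1" "x2 \<in> U2" unfolding x1_def x2_def using P1(2) P2(2) .
  define a b where "a = Y1 x1 + Z12 x2" and "b = Z21 x1 + Y2 x2"
  have "a \<in> U1" "b \<in> U2" unfolding a_def b_def using Y1(2) Z12(2) Z21(2) Y2(2) by (simp_all add: span_add)
  then have "X (Y x) = N1 a + (b + N2 b)"
    using projections_of_sum unfolding X_def Y_def a_def b_def x1_def x2_def by simp
  then have XY: "X (Y x) = N1 (Y1 x1) + N1 (Z12 x2) + (Z21 x1 + Y2 x2 + (N2 (Z21 x1) + N2 (Y2 x2)))"
    unfolding a_def b_def using pair.linear_add[OF N1(1)] pair.linear_add[OF N2(1)] by simp
  have "N1 x1 \<in> U1" "x2 + N2 x2 \<in> U2" using N1(3) N2(3) x12 by (simp_all add: span_add)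
  then have "Y (X x) = Y1 (N1 x1) + Z12 (x2 + N2 x2) + (Z21 (N1 x1) + Y2 (x2 + N2 x2))"
    using projections_of_sum unfolding X_def Y_def x1_def x2_def by simp
  then have YX: "Y (X x) = Y1 (N1 x1) + (Z12 x2 + Z12 (N2 x2)) + (Z21 (N1 x1) + (Y2 x2 + Y2 (N2 x2)))"
    using pair.linear_add[OF Z12(1)] pair.linear_add[OF Y2(1)] by simp
  have "X (Y x) - Y (X x) = (N1 (Y1 x1) - Y1 (N1 x1)) + (N1 (Z12 x2) - (Z12 x2 + Z12 (N2 x2)))
      + (Z21 x1 + N2 (Z21 x1) - Z21 (N1 x1)) + (N2 (Y2 x2) - Y2 (N2 x2))"
    unfolding XY YX by (simp add: algebra_simps)
  also have "\<dots> = (P1 (f x1) + P2 (f x1)) + (P1 (f x2) + P2 (f x2))"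
    using Y1(3) Z12(3) Z21(3) Y2(3) x12 by (simp add: algebra_simps)
  also have "\<dots> = f x1 + f x2"
    using P1_add_P2 lin_onD(1)[OF f_lin] x12 U1_sub U2_sub by (metis subsetD)
  also have "\<dots> = f x"
    using lin_onD(2)[OF f_lin] x12 U1_sub U2_sub P1_add_P2[OF x] unfolding x1_def x2_def
    by (metis subsetD)
  finally show ?thesis by simp
qed

theorem traceless_is_commutator:
  assumes "basis_trace B f = 0"
  shows "\<exists>a b. lin a \<and> lin b \<and> (\<forall>x. a x \<in> span B) \<and> (\<forall>x. b x \<in> span B) \<and>
    (\<forall>x\<in>span B. f x = a (b x) - b (a x))"
proof -
  obtain Y1 Y2 Z21 Z12 where
    Y1: "lin Y1" "\<forall>x. Y1 x \<in> U1" "\<forall>x\<in>U1. N1 (Y1 x) - Y1 (N1 x) = P1 (f x)"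
    and Y2: "lin Y2" "\<forall>x. Y2 x \<in> U2" "\<forall>x\<in>U2. N2 (Y2 x) - Y2 (N2 x) = P2 (f x)"
    and Z21: "lin Z21" "\<forall>x. Z21 x \<in> U2" "\<forall>x\<in>U1. Z21 x + N2 (Z21 x) - Z21 (N1 x) = P2 (f x)"
    and Z12: "lin Z12" "\<forall>x. Z12 x \<in> U1" "\<forall>x\<in>U2. N1 (Z12 x) - (Z12 x + Z12 (N2 x)) = P1 (f x)"
    using diagonal_block_us diagonal_block_ws[OF assms] off_diagonal_block_us_ws off_diagonal_block_ws_us
    by metis
  let ?X = "\<lambda>x. N1 (P1 x) + (P2 x + N2 (P2 x))"
  let ?Y = "\<lambda>x. (Y1 (P1 x) + Z12 (P2 x)) + (Z21 (P1 x) + Y2 (P2 x))"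
  have "lin ?X"
    by (intro pair.linear_compose_add lin_compose[OF P1(1) N1(1)] P2(1) lin_compose[OF P2(1) N2(1)])
  moreover have "lin ?Y"
    by (intro pair.linear_compose_add lin_compose[OF P1(1) Y1(1)] lin_compose[OF P2(1) Z12(1)]
        lin_compose[OF P1(1) Z21(1)] lin_compose[OF P2(1) Y2(1)])
  moreover have "?X x \<in> span B" "?Y x \<in> span B" for x
    using N1(3) P2(2) N2(3) Y1(2) Z12(2) Z21(2) Y2(2) U1_sub U2_sub by (meson span_add subsetD)+
  ultimately show ?thesis
    using commutator_from_blocks[OF Y1 Y2 Z21 Z12] by blast
qed

end

theorem (in endo_space) shoda:
  assumes E: "finite E" "independent E" and f: "lin_on scale (span E) (span E) f"
    and tr: "basis_trace E f = 0"
  shows "\<exists>a b. lin a \<and> lin b \<and> (\<forall>x. a x \<in> span E) \<and> (\<forall>x. b x \<in> span E) \<and>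
    (\<forall>x\<in>span E. f x = a (b x) - b (a x))"
proof -
  obtain us ws where B: "shoda_basis f us ws" and span: "span (set (us @ ws)) = span E"
    using shoda_basis_exists[OF f E(1)] by blast
  interpret shoda_decomposition scale f us ws
    using B f span by unfold_locales simp_all
  have "independent (set (us @ ws))" by (rule independent_B)
  then have "basis_trace (set (us @ ws)) f = 0"
    using basis_trace_change_basis[OF E _ _ span[symmetric] f] tr by simp
  then show ?thesis using traceless_is_commutator span by simp
qed

section \<open>Complexes of finite dimensional spaces\<close>

locale finite_complex = endo_space scale for scale :: "'k::field \<Rightarrow> 'v::ab_group_add \<Rightarrow> 'v" +
  fixes V :: "int \<Rightarrow> 'v set" and d :: "int \<Rightarrow> 'v \<Rightarrow> 'v"
  assumes complex: "is_complex scale V d"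
begin

abbreviation Z :: "int \<Rightarrow> 'v set" where "Z \<equiv> cocycles V d"
abbreviation Bd :: "int \<Rightarrow> 'v set" where "Bd \<equiv> coboundaries V d"

lemma finite_dim: "\<exists>S. finite S \<and> span S = V i"
  and d_lin_on: "lin_on scale (V i) (V (i + 1)) (d i)"
  and dd: "x \<in> V i \<Longrightarrow> d (i + 1) (d i x) = 0"
  using complex unfolding is_complex_def by blast+

lemma d_lin_on': "lin_on scale (V (i - 1)) (V i) (d (i - 1))"
  using d_lin_on[of "i - 1"] by simp

lemma subspace_V: "subspace (V i)"
  using finite_dim[of i] by (metis subspace_span)

lemma independent_finite: "independent S \<Longrightarrow> S \<subseteq> V i \<Longrightarrow> finite S"
  using finite_dim[of i] independent_span_bound by metis

lemma subspace_Z: "subspace (Z i)"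
  using lin_on_kernel_subspace[OF d_lin_on subspace_V] unfolding cocycles_def .

lemma subspace_Bd: "subspace (Bd i)"
  using lin_on_image_subspace[OF d_lin_on' subspace_V] unfolding coboundaries_def .

lemma Z_sub: "Z i \<subseteq> V i" unfolding cocycles_def by auto

lemma Bd_sub: "Bd i \<subseteq> Z i"
  unfolding coboundaries_def cocycles_def using lin_onD(1)[OF d_lin_on'] dd[of _ "i - 1"] by auto

text \<open>The bases of \<open>Bd i\<close> and \<open>Z i\<close> are chosen as in the definition of \<open>quot_trace\<close>, so that
  \<open>cohom_trace\<close> becomes a trace on \<open>H i = span (basis_H i)\<close>, a complement of \<open>Bd i\<close> in \<open>Z i\<close>
  representing \<open>H\<^sup>i\<close>.\<close>
definition basis_B :: "int \<Rightarrow> 'v set" where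
  "basis_B i = (SOME S. \<not> dependent S \<and> span S = Bd i)"
definition basis_Z :: "int \<Rightarrow> 'v set" where
  "basis_Z i = (SOME S. basis_B i \<subseteq> S \<and> \<not> dependent S \<and> span S = Z i)"
definition basis_V :: "int \<Rightarrow> 'v set" where
  "basis_V i = (SOME S. basis_Z i \<subseteq> S \<and> \<not> dependent S \<and> span S = V i)"
definition basis_H :: "int \<Rightarrow> 'v set" where
  "basis_H i = basis_Z i - basis_B i"

lemma quot_trace_basis:
  "quot_trace scale (Z i) (Bd i) g = (\<Sum>b\<in>basis_H i. representation (basis_Z i) (g b) b)"
  unfolding quot_trace_def Let_def basis_B_def[symmetric] basis_Z_def[symmetric] basis_H_def ..

lemma basis_B: "independent (basis_B i) \<and> span (basis_B i) = Bd i"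
proof -
  have "\<exists>S. independent S \<and> span S = Bd i"
    using extend_to_basis[OF subspace_Bd empty_subsetI independent_empty] by blast
  then show ?thesis unfolding basis_B_def by (rule someI_ex)
qed

lemma basis_Z: "basis_B i \<subseteq> basis_Z i \<and> independent (basis_Z i) \<and> span (basis_Z i) = Z i"
proof -
  have "basis_B i \<subseteq> Z i" using basis_B[of i] Bd_sub span_base by blast
  then have "\<exists>S. basis_B i \<subseteq> S \<and> independent S \<and> span S = Z i"
    using extend_to_basis[OF subspace_Z _ conjunct1[OF basis_B]] by blast
  then show ?thesis unfolding basis_Z_def by (rule someI_ex)
qed

lemma basis_V: "basis_Z i \<subseteq> basis_V i \<and> independent (basis_V i) \<and> span (basis_V i) = V i"
proof -
  have "basis_Z i \<subseteq> V i" using basis_Z[of i] Z_sub span_base by blast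
  then have "\<exists>S. basis_Z i \<subseteq> S \<and> independent S \<and> span S = V i"
    using extend_to_basis[OF subspace_V _ conjunct1[OF conjunct2[OF basis_Z]]] by blast
  then show ?thesis unfolding basis_V_def by (rule someI_ex)
qed

lemma independent_basis_V: "independent (basis_V i)"
  using basis_V by blast

lemma finite_basis_V: "finite (basis_V i)"
proof (rule independent_finite)
  show "independent (basis_V i)" "basis_V i \<subseteq> V i" using basis_V[of i] span_base by auto
qed

lemma basis_H_sub: "basis_H i \<subseteq> basis_V i"
  using basis_V basis_Z unfolding basis_H_def by blast

lemma basis_H: "finite (basis_H i)" "independent (basis_H i)" "basis_H i \<subseteq> Z i"
proof -
  show "finite (basis_H i)" using finite_basis_V basis_H_sub finite_subset by blast
  show "independent (basis_H i)" using basis_V[of i] basis_H_sub[of i] dependent_mono by blast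
  show "basis_H i \<subseteq> Z i" using basis_Z span_base unfolding basis_H_def by blast
qed

abbreviation H :: "int \<Rightarrow> 'v set" where "H i \<equiv> span (basis_H i)"
abbreviation C :: "int \<Rightarrow> 'v set" where "C i \<equiv> span (basis_V i - basis_Z i)"

definition pH :: "int \<Rightarrow> 'v \<Rightarrow> 'v" where "pH i = basis_projection (basis_V i) (basis_H i)"
definition pB :: "int \<Rightarrow> 'v \<Rightarrow> 'v" where "pB i = basis_projection (basis_V i) (basis_B i)"
definition pC :: "int \<Rightarrow> 'v \<Rightarrow> 'v" where "pC i = basis_projection (basis_V i) (basis_V i - basis_Z i)"

lemma H_sub_Z: "H i \<subseteq> Z i"
  using basis_H(3) span_minimal[OF _ subspace_Z] by blast

lemma C_sub_V: "C i \<subseteq> V i"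
  using basis_V[of i] span_mono[of "basis_V i - basis_Z i" "basis_V i"] by auto

lemma pH: "lin (pH i)" "pH i x \<in> H i" "x \<in> H i \<Longrightarrow> pH i x = x"
  "x \<in> Bd i \<Longrightarrow> pH i x = 0" "x \<in> C i \<Longrightarrow> pH i x = 0"
proof -
  have "basis_B i \<subseteq> basis_V i - basis_H i" "basis_V i - basis_Z i \<subseteq> basis_V i - basis_H i"
    using basis_Z[of i] basis_V[of i] unfolding basis_H_def by auto
  then have "Bd i \<subseteq> span (basis_V i - basis_H i)" "C i \<subseteq> span (basis_V i - basis_H i)"
    using span_mono basis_B[of i] by metis+
  then show "lin (pH i)" "pH i x \<in> H i" "x \<in> H i \<Longrightarrow> pH i x = x"
    "x \<in> Bd i \<Longrightarrow> pH i x = 0" "x \<in> C i \<Longrightarrow> pH i x = 0"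
    using basis_projection[OF independent_basis_V basis_H_sub] unfolding pH_def by blast+
qed

lemma pB: "lin (pB i)" "pB i x \<in> Bd i" "x \<in> Bd i \<Longrightarrow> pB i x = x"
  "x \<in> H i \<Longrightarrow> pB i x = 0" "x \<in> C i \<Longrightarrow> pB i x = 0"
proof -
  have sub: "basis_B i \<subseteq> basis_V i" using basis_Z[of i] basis_V[of i] by blast
  have "basis_H i \<subseteq> basis_V i - basis_B i" "basis_V i - basis_Z i \<subseteq> basis_V i - basis_B i"
    using basis_Z[of i] basis_V[of i] unfolding basis_H_def by auto
  then have "H i \<subseteq> span (basis_V i - basis_B i)" "C i \<subseteq> span (basis_V i - basis_B i)"
    using span_mono by auto
  then show "lin (pB i)" "pB i x \<in> Bd i" "x \<in> Bd i \<Longrightarrow> pB i x = x"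
    "x \<in> H i \<Longrightarrow> pB i x = 0" "x \<in> C i \<Longrightarrow> pB i x = 0"
    using basis_projection[OF independent_basis_V sub] basis_B[of i]
    unfolding pB_def by auto
qed

lemma pC: "lin (pC i)" "pC i x \<in> C i" "x \<in> C i \<Longrightarrow> pC i x = x" "x \<in> Z i \<Longrightarrow> pC i x = 0"
proof -
  have "basis_V i - (basis_V i - basis_Z i) = basis_Z i" using basis_V[of i] by blast
  then show "lin (pC i)" "pC i x \<in> C i" "x \<in> C i \<Longrightarrow> pC i x = x" "x \<in> Z i \<Longrightarrow> pC i x = 0"
    using basis_projection[OF independent_basis_V Diff_subset]
      basis_Z[of i] unfolding pC_def by auto
qed

lemma split_V: "x \<in> V i \<Longrightarrow> pB i x + pH i x + pC i x = x"
proof (rule pair.linear_eq_on[OF pair.linear_compose_add[OF pair.linear_compose_add[OF pB(1) pH(1)] pC(1)]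
      linear_ident])
  show "x \<in> V i \<Longrightarrow> x \<in> span (basis_V i)" using basis_V by simp
  fix b assume b: "b \<in> basis_V i"
  then consider "b \<in> basis_B i" | "b \<in> basis_H i" | "b \<in> basis_V i - basis_Z i"
    using basis_Z[of i] unfolding basis_H_def by blast
  then show "pB i b + pH i b + pC i b = b"
  proof cases
    case 1
    then have "b \<in> Bd i" using basis_B span_base by blast
    moreover from this have "b \<in> Z i" using Bd_sub by blast
    ultimately show ?thesis using pB(3) pH(4) pC(4) by simp
  next
    case 2
    then have "b \<in> H i" using span_base by blast
    moreover from this have "b \<in> Z i" using H_sub_Z by blast
    ultimately show ?thesis using pB(4) pH(3) pC(4) by simp
  next
    case 3
    then have "b \<in> C i" using span_base by blast
    then show ?thesis using pB(5) pH(5) pC(3) by auto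
  qed
qed

lemma C_inter_Z: "x \<in> C i \<Longrightarrow> x \<in> Z i \<Longrightarrow> x = 0"
  using pC(3,4) by metis

lemma d_pC: "x \<in> V i \<Longrightarrow> d i (pC i x) = d i x"
proof -
  assume x: "x \<in> V i"
  have "pB i x + pH i x \<in> Z i" using pB(2) pH(2) Bd_sub H_sub_Z subspace_add[OF subspace_Z] by blast
  then have "d i (pB i x + pH i x) = 0" unfolding cocycles_def by simp
  moreover have "d i x = d i (pB i x + pH i x) + d i (pC i x)"
    using lin_onD(2)[OF d_lin_on] split_V[OF x] \<open>pB i x + pH i x \<in> Z i\<close> Z_sub pC(2) C_sub_V
    by (metis subsetD)
  ultimately show ?thesis by simp
qed

definition preimage :: "int \<Rightarrow> 'v \<Rightarrow> 'v" where
  "preimage i u = (SOME c. c \<in> C (i - 1) \<and> d (i - 1) c = u)"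

lemma preimage: "u \<in> Bd i \<Longrightarrow> preimage i u \<in> C (i - 1) \<and> d (i - 1) (preimage i u) = u"
proof -
  assume "u \<in> Bd i"
  then obtain y where "y \<in> V (i - 1)" "u = d (i - 1) y" unfolding coboundaries_def by blast
  then have "pC (i - 1) y \<in> C (i - 1) \<and> d (i - 1) (pC (i - 1) y) = u" using pC(2) d_pC by simp
  then show ?thesis unfolding preimage_def by (rule someI)
qed

text \<open>A contracting homotopy onto \<open>H\<close>: \<open>h\<close> inverts \<open>d\<close> from \<open>Bd i\<close> back to \<open>C (i - 1)\<close>.\<close>
definition h :: "int \<Rightarrow> 'v \<Rightarrow> 'v" where
  "h i = pair.construct (basis_V i) (\<lambda>b. if b \<in> basis_B i then preimage i b else 0)"

lemma h: "lin (h i)" "h i x \<in> C (i - 1)"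
proof -
  show "lin (h i)" unfolding h_def by (rule pair.linear_construct[OF independent_basis_V])
  have mem: "(if b \<in> basis_B i then preimage i b else 0) \<in> C (i - 1)" for b
  proof (cases "b \<in> basis_B i")
    case True
    then have "b \<in> Bd i" using basis_B[of i] span_base by metis
    then show ?thesis using preimage True by simp
  qed (simp add: span_zero)
  then have "span ((\<lambda>b. if b \<in> basis_B i then preimage i b else 0) ` basis_V i) \<subseteq> C (i - 1)"
    by (intro span_minimal image_subsetI mem subspace_span)
  then show "h i x \<in> C (i - 1)"
    using pair.construct_in_span[OF independent_basis_V] unfolding h_def by blast
qed

lemma pB_basis: "b \<in> basis_V i \<Longrightarrow> pB i b = (if b \<in> basis_B i then b else 0)"
  unfolding pB_def basis_projection_def using pair.construct_basis[OF independent_basis_V] by blast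

lemma h_basis: "b \<in> basis_V i \<Longrightarrow> h i b = (if b \<in> basis_B i then preimage i b else 0)"
  unfolding h_def using pair.construct_basis[OF independent_basis_V] by blast

lemma h_V: "h i x \<in> V (i - 1)"
  using h(2) C_sub_V by blast

lemma d_h: assumes x: "x \<in> V i" shows "d (i - 1) (h i x) = pB i x"
proof -
  have lin: "lin_on scale (span (basis_V i)) (V i) (\<lambda>x. d (i - 1) (h i x))"
    using lin_on_comp[OF linear_imp_lin_on[OF h(1) h_V] d_lin_on'] .
  have "d (i - 1) (h i b) = pB i b" if b: "b \<in> basis_V i" for b
  proof (cases "b \<in> basis_B i")
    case True
    then have "b \<in> Bd i" using basis_B[of i] span_base by metis
    then show ?thesis using h_basis[OF b] True preimage[of b i] pB(3)[of b i] by simp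
  next
    case False
    then have "pB i b = 0" using pB_basis[OF b] by simp
    then show ?thesis using h_basis[OF b] False lin_on_zero[OF d_lin_on' subspace_V] by simp
  qed
  moreover have "x \<in> span (basis_V i)" using x basis_V by simp
  ultimately show ?thesis
    by (rule lin_on_eq_on_span[OF finite_basis_V independent_basis_V lin
          linear_imp_lin_on_UNIV[OF pB(1)]])
qed

lemma h_d: assumes x: "x \<in> V i" shows "h (i + 1) (d i x) = pC i x"
proof -
  define c where "c = pC i x"
  have c: "c \<in> C i" "c \<in> V i" unfolding c_def using pC(2) C_sub_V by blast+
  have "d i c \<in> Bd (i + 1)" using c(2) unfolding coboundaries_def by simp
  moreover have "d i c \<in> V (i + 1)" using lin_onD(1)[OF d_lin_on c(2)] .
  ultimately have "d i (h (i + 1) (d i c)) = d i c" using d_h[of "d i c" "i + 1"] pB(3) by simp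
  moreover have w: "h (i + 1) (d i c) \<in> C i" "h (i + 1) (d i c) \<in> V i"
    using h(2)[of "i + 1"] h_V[of "i + 1"] by simp_all
  ultimately have "h (i + 1) (d i c) - c \<in> Z i"
    using lin_on_diff[OF d_lin_on subspace_V w(2) c(2)] subspace_diff[OF subspace_V w(2) c(2)]
    unfolding cocycles_def by simp
  moreover have "h (i + 1) (d i c) - c \<in> C i" using subspace_diff[OF subspace_span w(1) c(1)] .
  ultimately have "h (i + 1) (d i c) = c" using C_inter_Z by fastforce
  then show ?thesis using d_pC[OF x] unfolding c_def by simp
qed

lemma contraction:
  assumes "x \<in> V i" shows "d (i - 1) (h i x) + h (i + 1) (d i x) = x - pH i x"
  using d_h[OF assms] h_d[OF assms] split_V[OF assms] by (simp add: algebra_simps)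

lemma chain_mapD:
  assumes "chain_map scale V d g"
  shows "lin_on scale (V i) (V i) (g i)" and "x \<in> V i \<Longrightarrow> d i (g i x) = g (i + 1) (d i x)"
  using assms unfolding chain_map_def by blast+

lemma chain_map_Z: assumes g: "chain_map scale V d g" and x: "x \<in> Z i" shows "g i x \<in> Z i"
proof -
  have "x \<in> V i" "d i x = 0" using x unfolding cocycles_def by auto
  then have "d i (g i x) = g (i + 1) 0" using chain_mapD(2)[OF g] by simp
  then show ?thesis
    using lin_on_zero[OF chain_mapD(1)[OF g] subspace_V] lin_onD(1)[OF chain_mapD(1)[OF g] \<open>x \<in> V i\<close>]
    unfolding cocycles_def by simp
qed

lemma chain_map_Bd: assumes g: "chain_map scale V d g" and x: "x \<in> Bd i" shows "g i x \<in> Bd i"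
proof -
  obtain y where y: "y \<in> V (i - 1)" "x = d (i - 1) y" using x unfolding coboundaries_def by blast
  then have "g i x = d (i - 1) (g (i - 1) y)" using chain_mapD(2)[OF g y(1)] by simp
  then show ?thesis using lin_onD(1)[OF chain_mapD(1)[OF g] y(1)] unfolding coboundaries_def by blast
qed

lemma Z_split: assumes y: "y \<in> Z i" shows "y = pB i y + pH i y"
proof -
  have "y \<in> V i" using y Z_sub by blast
  then show ?thesis using split_V pC(4)[OF y] by (metis add.right_neutral)
qed

lemma representation_pH:
  assumes y: "y \<in> Z i" and e: "e \<in> basis_H i"
  shows "representation (basis_H i) (pH i y) e = representation (basis_Z i) y e"
proof -
  have BZ: "basis_H i \<subseteq> basis_Z i" "basis_B i \<subseteq> basis_Z i" "independent (basis_Z i)"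
    using basis_Z unfolding basis_H_def by auto
  have pBy: "pB i y \<in> span (basis_B i)" "pB i y \<in> span (basis_Z i)"
    using pB(2)[of i y] basis_B[of i] basis_Z[of i] Bd_sub[of i] by auto
  have pHy: "pH i y \<in> span (basis_Z i)" using pH(2) span_mono[OF BZ(1)] by blast
  have "representation (basis_Z i) (pB i y) e = representation (basis_B i) (pB i y) e"
    using representation_extend[OF BZ(3) pBy(1) BZ(2)] by simp
  also have "\<dots> = 0" using representation_ne_zero e unfolding basis_H_def by blast
  finally have "representation (basis_Z i) (pB i y) e = 0" .
  moreover have "representation (basis_Z i) (pH i y) = representation (basis_H i) (pH i y)"
    using representation_extend[OF BZ(3) pH(2) BZ(1)] .
  moreover have "representation (basis_Z i) (pB i y + pH i y) e
      = representation (basis_Z i) (pB i y) e + representation (basis_Z i) (pH i y) e"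
    using representation_add[OF BZ(3) pHy pBy(2)] by simp
  ultimately show ?thesis using Z_split[OF y] by simp
qed

lemma cohom_trace_eq_basis_trace:
  assumes g: "chain_map scale V d g"
  shows "cohom_trace scale V d g i = basis_trace (basis_H i) (\<lambda>x. pH i (g i x))"
  unfolding cohom_trace_def quot_trace_basis basis_trace_def
proof (intro sum.cong refl)
  fix b assume b: "b \<in> basis_H i"
  then have "g i b \<in> Z i" using chain_map_Z[OF g] basis_H(3) by blast
  then show "representation (basis_Z i) (g i b) b = representation (basis_H i) (pH i (g i b)) b"
    using representation_pH[OF _ b] by simp
qed

lemma pH_homotopic:
  assumes "chain_homotopic scale V d \<phi> \<psi>" and x: "x \<in> Z i"
  shows "pH i (\<phi> i x) = pH i (\<psi> i x)"
proof -
  obtain k where k: "\<And>i. lin_on scale (V i) (V (i - 1)) (k i)"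
    "\<And>i x. x \<in> V i \<Longrightarrow> \<phi> i x - \<psi> i x = d (i - 1) (k i x) + k (i + 1) (d i x)"
    using assms(1) unfolding chain_homotopic_def by blast
  have "x \<in> V i" "d i x = 0" using x unfolding cocycles_def by auto
  then have "\<phi> i x - \<psi> i x = d (i - 1) (k i x)"
    using k(2) lin_on_zero[OF k(1) subspace_V] by simp
  moreover have "d (i - 1) (k i x) \<in> Bd i"
    using lin_onD(1)[OF k(1) \<open>x \<in> V i\<close>] unfolding coboundaries_def by blast
  ultimately have "pH i (\<phi> i x - \<psi> i x) = 0" using pH(4) by simp
  then show ?thesis using pair.linear_diff[OF pH(1)] by simp
qed

lemma pH_chain_map:
  assumes g: "chain_map scale V d g" and y: "y \<in> Z i"
  shows "pH i (g i y) = pH i (g i (pH i y))"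
proof -
  have "g i y = g i (pB i y) + g i (pH i y)"
    using lin_onD(2)[OF chain_mapD(1)[OF g]] Z_split[OF y] pB(2) pH(2) Bd_sub H_sub_Z Z_sub
    by (metis subsetD)
  moreover have "pH i (g i (pB i y)) = 0" using pH(4) chain_map_Bd[OF g pB(2)] by blast
  ultimately show ?thesis using pair.linear_add[OF pH(1)] by simp
qed

lemma compression_lin_on:
  assumes "chain_map scale V d g" shows "lin_on scale (H i) (H i) (\<lambda>x. pH i (g i x))"
proof -
  have "H i \<subseteq> V i" using H_sub_Z Z_sub by blast
  then show ?thesis
    using lin_on_comp[OF lin_on_mono[OF chain_mapD(1)[OF assms]] linear_imp_lin_on[OF pH(1) pH(2)]]
    by blast
qed

theorem cohom_trace_homotopic_commutator:
  assumes \<phi>: "chain_map scale V d \<phi>" and \<alpha>: "chain_map scale V d \<alpha>" and \<beta>: "chain_map scale V d \<beta>"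
    and hom: "chain_homotopic scale V d \<phi> (\<lambda>i x. \<alpha> i (\<beta> i x) - \<beta> i (\<alpha> i x))"
  shows "cohom_trace scale V d \<phi> i = 0"
proof -
  let ?t = "basis_trace (basis_H i)"
  have "pH i (\<phi> i b) = pH i (\<alpha> i (\<beta> i b)) - pH i (\<beta> i (\<alpha> i b))" if "b \<in> basis_H i" for b
    using pH_homotopic[OF hom] basis_H(3) that pair.linear_diff[OF pH(1)] by auto
  then have "cohom_trace scale V d \<phi> i = ?t (\<lambda>x. pH i (\<alpha> i (\<beta> i x)) - pH i (\<beta> i (\<alpha> i x)))"
    unfolding cohom_trace_eq_basis_trace[OF \<phi>] by (rule basis_trace_cong)
  also have "\<dots> = ?t (\<lambda>x. pH i (\<alpha> i (\<beta> i x))) - ?t (\<lambda>x. pH i (\<beta> i (\<alpha> i x)))"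
    by (rule basis_trace_diff[OF basis_H(2)]) (rule pH(2))+
  also have "?t (\<lambda>x. pH i (\<alpha> i (\<beta> i x))) = ?t (\<lambda>x. pH i (\<alpha> i (pH i (\<beta> i x))))"
    using pH_chain_map[OF \<alpha> chain_map_Z[OF \<beta>]] basis_H(3) by (intro basis_trace_cong) blast
  also have "\<dots> = ?t (\<lambda>x. pH i (\<beta> i (pH i (\<alpha> i x))))"
    using basis_trace_commute[OF basis_H(1,2) compression_lin_on[OF \<alpha>] compression_lin_on[OF \<beta>]] .
  also have "\<dots> = ?t (\<lambda>x. pH i (\<beta> i (\<alpha> i x)))"
    using pH_chain_map[OF \<beta> chain_map_Z[OF \<alpha>], symmetric] basis_H(3)
    by (intro basis_trace_cong) blast
  finally show ?thesis by simp
qed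

lemma pH_Z: "pH i x \<in> Z i"
  using pH(2) H_sub_Z by blast

lemma pH_V: "pH i x \<in> V i"
  using pH_Z Z_sub by blast

lemma d_pH: "d i (pH i x) = 0"
  using pH_Z unfolding cocycles_def by blast

lemma chain_map_through_H:
  assumes G: "\<And>i. lin (G i)" "\<And>i x. G i x \<in> H i"
  shows "chain_map scale V d (\<lambda>i x. G i (pH i x))"
  unfolding chain_map_def
proof (intro conjI allI ballI)
  fix i
  have "G i (pH i x) \<in> V i" for x using G(2) H_sub_Z Z_sub by blast
  then show "lin_on scale (V i) (V i) (\<lambda>x. G i (pH i x))"
    by (intro linear_imp_lin_on lin_compose[OF pH(1) G(1)])
  fix x assume x: "x \<in> V i"
  have "d i (G i (pH i x)) = 0" using G(2) H_sub_Z unfolding cocycles_def by blast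
  moreover have "pH (i + 1) (d i x) = 0" using pH(4) x unfolding coboundaries_def by force
  ultimately show "d i (G i (pH i x)) = G (i + 1) (pH (i + 1) (d i x))"
    using pair.linear_0[OF G(1)] by simp
qed

lemma pH_chain_map_h_d:
  assumes \<phi>: "chain_map scale V d \<phi>" and x: "x \<in> V i"
  shows "pH i (\<phi> i (h (i + 1) (d i x))) = pH i (\<phi> i x) - pH i (\<phi> i (pH i x))"
proof -
  define w where "w = d (i - 1) (h i x)"
  have wV: "w \<in> V i" using lin_onD(1)[OF d_lin_on' h_V] unfolding w_def .
  have "w + h (i + 1) (d i x) = x - pH i x" using contraction[OF x] unfolding w_def .
  then have y: "h (i + 1) (d i x) = (x - pH i x) - w" by (simp add: eq_diff_eq add.commute)
  have "\<phi> i ((x - pH i x) - w) = (\<phi> i x - \<phi> i (pH i x)) - \<phi> i w"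
    using lin_on_diff[OF chain_mapD(1)[OF \<phi>] subspace_V] subspace_diff[OF subspace_V x pH_V]
      x pH_V wV by simp
  moreover have "\<phi> i w = d (i - 1) (\<phi> (i - 1) (h i x))"
    using chain_mapD(2)[OF \<phi> h_V, of i x] unfolding w_def by simp
  then have "pH i (\<phi> i w) = 0"
    using pH(4) lin_onD(1)[OF chain_mapD(1)[OF \<phi>] h_V] unfolding coboundaries_def by blast
  ultimately show ?thesis unfolding y using pair.linear_diff[OF pH(1)] by simp
qed

text \<open>Since \<open>d h + h d = 1 - pH\<close>, the map \<open>K = h \<phi> + pH \<phi> h\<close> is a homotopy from \<open>\<phi>\<close> to its
  compression \<open>pH \<phi> pH\<close>.\<close>
lemma homotopic_to_compression:
  assumes \<phi>: "chain_map scale V d \<phi>"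
  shows "chain_homotopic scale V d \<phi> (\<lambda>i x. pH i (\<phi> i (pH i x)))"
proof -
  define K where "K i x = h i (\<phi> i x) + pH (i - 1) (\<phi> (i - 1) (h i x))" for i x
  have "lin_on scale (V i) (V (i - 1)) (K i)" for i
  proof -
    have hV: "lin_on scale (V i) (V (i - 1)) (h i)" by (rule linear_imp_lin_on[OF h(1) h_V])
    have pHV: "lin_on scale (V (i - 1)) (V (i - 1)) (pH (i - 1))"
      by (rule linear_imp_lin_on[OF pH(1) pH_V])
    show ?thesis unfolding K_def
      by (rule lin_on_add[OF lin_on_comp[OF chain_mapD(1)[OF \<phi>] hV]
            lin_on_comp[OF hV lin_on_comp[OF chain_mapD(1)[OF \<phi>] pHV]] subspace_V])
  qed
  moreover have "\<phi> i x - pH i (\<phi> i (pH i x)) = d (i - 1) (K i x) + K (i + 1) (d i x)"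
    if x: "x \<in> V i" for i x
  proof -
    have "d (i - 1) (K i x) = d (i - 1) (h i (\<phi> i x)) + d (i - 1) (pH (i - 1) (\<phi> (i - 1) (h i x)))"
      unfolding K_def using lin_onD(2)[OF d_lin_on' h_V pH_V] .
    then have "d (i - 1) (K i x) + K (i + 1) (d i x)
        = (d (i - 1) (h i (\<phi> i x)) + h (i + 1) (\<phi> (i + 1) (d i x))) + pH i (\<phi> i (h (i + 1) (d i x)))"
      using d_pH by (simp add: K_def add.assoc)
    also have "\<dots> = (\<phi> i x - pH i (\<phi> i x)) + (pH i (\<phi> i x) - pH i (\<phi> i (pH i x)))"
      using contraction[OF lin_onD(1)[OF chain_mapD(1)[OF \<phi>] x]] chain_mapD(2)[OF \<phi> x]
        pH_chain_map_h_d[OF \<phi> x] by simp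
    finally show ?thesis by simp
  qed
  ultimately show ?thesis unfolding chain_homotopic_def by blast
qed

theorem homotopic_commutator_of_cohom_trace_zero:
  assumes \<phi>: "chain_map scale V d \<phi>" and tr: "\<forall>i. cohom_trace scale V d \<phi> i = 0"
  shows "\<exists>\<alpha> \<beta>. chain_map scale V d \<alpha> \<and> chain_map scale V d \<beta> \<and>
    chain_homotopic scale V d \<phi> (\<lambda>i x. \<alpha> i (\<beta> i x) - \<beta> i (\<alpha> i x))"
proof -
  have "\<forall>i. \<exists>a b. lin a \<and> lin b \<and> (\<forall>x. a x \<in> H i) \<and> (\<forall>x. b x \<in> H i) \<and>
      (\<forall>x\<in>H i. pH i (\<phi> i x) = a (b x) - b (a x))"
    using shoda[OF basis_H(1,2) compression_lin_on[OF \<phi>]] tr cohom_trace_eq_basis_trace[OF \<phi>]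
    by simp
  then obtain A B where AB: "\<And>i. lin (A i)" "\<And>i. lin (B i)" "\<And>i x. A i x \<in> H i" "\<And>i x. B i x \<in> H i"
    "\<And>i x. x \<in> H i \<Longrightarrow> pH i (\<phi> i x) = A i (B i x) - B i (A i x)"
    by metis
  define \<alpha> where "\<alpha> i x = A i (pH i x)" for i x
  define \<beta> where "\<beta> i x = B i (pH i x)" for i x
  have "chain_map scale V d \<alpha>" "chain_map scale V d \<beta>"
    unfolding \<alpha>_def[abs_def] \<beta>_def[abs_def] using chain_map_through_H AB(1-4) by blast+
  moreover have "\<alpha> i (\<beta> i x) - \<beta> i (\<alpha> i x) = pH i (\<phi> i (pH i x))" for i x
    unfolding \<alpha>_def \<beta>_def using AB(3-5) pH(2,3) by simp
  then have "chain_homotopic scale V d \<phi> (\<lambda>i x. \<alpha> i (\<beta> i x) - \<beta> i (\<alpha> i x))"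
    using homotopic_to_compression[OF \<phi>] by simp
  ultimately show ?thesis by blast
qed

end

theorem theorem3:
  fixes scale :: "'k::field \<Rightarrow> 'v::ab_group_add \<Rightarrow> 'v"
    and V :: "int \<Rightarrow> 'v set"
    and d \<phi> :: "int \<Rightarrow> 'v \<Rightarrow> 'v"
  assumes "vector_space scale"
    and "is_complex scale V d"
    and "chain_map scale V d \<phi>"
  shows "(\<exists>\<alpha> \<beta>. chain_map scale V d \<alpha> \<and> chain_map scale V d \<beta> \<and>
            chain_homotopic scale V d \<phi> (\<lambda>i x. \<alpha> i (\<beta> i x) - \<beta> i (\<alpha> i x)))
         \<longleftrightarrow> (\<forall>i. cohom_trace scale V d \<phi> i = 0)"
proof -
  interpret finite_complex scale V d
    using assms(1,2) by (simp add: finite_complex_def endo_space_def finite_complex_axioms_def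
        vector_space_pair_def)
  show ?thesis
    using cohom_trace_homotopic_commutator[OF assms(3)] homotopic_commutator_of_cohom_trace_zero[OF assms(3)]
    by blast
qed

end
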